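(* Each $f_i$ ($1\le i\le d$) lies in $\mathbb R(\mathbb R^d\oplus\mathfrak{so}(d,\mathbb R))^{O_d(\mathbb R)}$. In particular $U_d(\mathbb R)=U_d(\mathbb C)\cap(\mathbb R^d\oplus\mathfrak{so}(d,\mathbb R))$ is a well-defined, $O_d(\mathbb R)$-invariant, non-empty Zariski-open subset of $\mathbb R^d\oplus\mathfrak{so}(d,\mathbb R)$, and $L^{(d-1)}\cap(\mathbb R^d\oplus\mathfrak{so}(d,\mathbb R))$ intersects each $O_d(\mathbb R)$-orbit contained in $U_d(\mathbb R)$.
   Context: Fix $d\ge2$. $V=\mathbb C^d\oplus\mathfrak{so}(d,\mathbb C)$, elements $(v,M)$ with $v=(c_1,\dots,c_d)^\top$, $M$ skew-symmetric, $M_{ij}=c_{ij}=-M_{ji}$ for $i<j$; $\mathbb R^d\oplus\mathfrak{so}(d,\mathbb R)$ is its real points. $O_d(\mathbb K)=\{A\in\mathbb K^{d\times d}:AA^\top=I\}$ acts by $A\cdot(v,M)=(Av,AMA^\top)$. $L^{(1)}=\{c_1=\dots=c_{d-1}=0\}$, $L^{(i)}=\{(v,M)\in L^{(i-1)}:c_{k(d-i+2)}=0,\ 1\le k\le d-i\}$ for $2\le i\le d-1$. $f_1=\sum c_i^2$; for $2\le i\le d-1$, $f_i$ is the $O_d(\mathbb C)$-invariant rational function on $V$ with $f_i|_{L^{(i-1)}}=c_{1(d-i+2)}^2+\dots+c_{(d-i+1)(d-i+2)}^2$; $f_d$ is the invariant rational function with $f_d|_{L^{(d-1)}}=c_{12}^2$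 (these exist and are uniquely determined). $U_d(\mathbb C)$ is the set of points of $V$ in the domain of all $f_k$ with $\prod_kf_k\neq0$. $\mathbb R(X)^G$ denotes the field of $G$-invariant rational functions with real coefficients. *)

theory Defs
  imports Complex_Main
begin

text \<open>Points of V = C^d (+) so(d,C): a pair (v, M) with v i = c_i (1 <= i <= d)
  and M i j = c_ij, M skew-symmetric, everything outside the index range {1..d} zero.\<close>
type_synonym pt = "(nat \<Rightarrow> complex) \<times> (nat \<Rightarrow> nat \<Rightarrow> complex)"

definition Vsp :: "nat \<Rightarrow> pt set" where
  "Vsp d = {(v, M). (\<forall>i. i \<notin> {1..d} \<longrightarrow> v i = 0)
                  \<and> (\<forall>i j. i \<notin> {1..d} \<or> j \<notin> {1..d} \<longrightarrow> M i j = 0)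
                  \<and> (\<forall>i j. M j i = - M i j)}"

definition VR :: "nat \<Rightarrow> pt set" where
  "VR d = {(v, M) \<in> Vsp d. (\<forall>i. v i \<in> \<real>) \<and> (\<forall>i j. M i j \<in> \<real>)}"

text \<open>O_d(K) for K = C (UNIV) or K = R (Reals), as d x d matrices indexed by {1..d}.\<close>
definition Orth :: "nat \<Rightarrow> complex set \<Rightarrow> (nat \<Rightarrow> nat \<Rightarrow> complex) set" where
  "Orth d K = {A. (\<forall>i j. A i j \<in> K)
                \<and> (\<forall>i j. i \<notin> {1..d} \<or> j \<notin> {1..d} \<longrightarrow> A i j = 0)
                \<and> (\<forall>i\<in>{1..d}. \<forall>k\<in>{1..d}.
                      (\<Sum>j=1..d. A i j * A k j) = (if i = k then 1 else 0))}"

definition act :: "nat \<Rightarrow> (nat \<Rightarrow> nat \<Rightarrow> complex) \<Rightarrow> pt \<Rightarrow> pt" where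
  "act d A x = (case x of (v, M) \<Rightarrow>
      (\<lambda>i. \<Sum>j=1..d. A i j * v j,
       \<lambda>i k. \<Sum>j=1..d. \<Sum>l=1..d. A i j * M j l * A k l))"

inductive poly_fun :: "nat \<Rightarrow> complex set \<Rightarrow> (pt \<Rightarrow> complex) \<Rightarrow> bool"
  for d :: nat and K :: "complex set" where
  const: "c \<in> K \<Longrightarrow> poly_fun d K (\<lambda>x. c)"
| coord_v: "1 \<le> i \<Longrightarrow> i \<le> d \<Longrightarrow> poly_fun d K (\<lambda>x. fst x i)"
| coord_M: "1 \<le> i \<Longrightarrow> i < j \<Longrightarrow> j \<le> d \<Longrightarrow> poly_fun d K (\<lambda>x. snd x i j)"
| add: "poly_fun d K p \<Longrightarrow> poly_fun d K q \<Longrightarrow> poly_fun d K (\<lambda>x. p x + q x)"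
| mult: "poly_fun d K p \<Longrightarrow> poly_fun d K q \<Longrightarrow> poly_fun d K (\<lambda>x. p x * q x)"

text \<open>The rational function P/Q on V, as a partial function: defined exactly on its
  domain of definition (points where some representative P'/Q' of the same element
  of C(V) has Q' nonzero), with its value there.\<close>
definition ratfun_of :: "nat \<Rightarrow> (pt \<Rightarrow> complex) \<Rightarrow> (pt \<Rightarrow> complex) \<Rightarrow> pt \<Rightarrow> complex option" where
  "ratfun_of d P Q x =
    (if x \<in> Vsp d \<and> (\<exists>P' Q'. poly_fun d UNIV P' \<and> poly_fun d UNIV Q'
            \<and> (\<forall>y\<in>Vsp d. P y * Q' y = P' y * Q y) \<and> Q' x \<noteq> 0)
     then Some (THE c. \<exists>P' Q'. poly_fun d UNIV P' \<and> poly_fun d UNIV Q'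
            \<and> (\<forall>y\<in>Vsp d. P y * Q' y = P' y * Q y) \<and> Q' x \<noteq> 0 \<and> c = P' x / Q' x)
     else None)"

definition is_ratfun :: "nat \<Rightarrow> complex set \<Rightarrow> (pt \<Rightarrow> complex option) \<Rightarrow> bool" where
  "is_ratfun d K g = (\<exists>P Q. poly_fun d K P \<and> poly_fun d K Q \<and> (\<exists>x\<in>Vsp d. Q x \<noteq> 0)
                         \<and> g = ratfun_of d P Q)"

definition invariant :: "nat \<Rightarrow> complex set \<Rightarrow> (pt \<Rightarrow> complex option) \<Rightarrow> bool" where
  "invariant d K g = (\<forall>A\<in>Orth d K. \<forall>x\<in>Vsp d. g (act d A x) = g x)"

fun Lset :: "nat \<Rightarrow> nat \<Rightarrow> pt set" where
  "Lset d 0 = Vsp d"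
| "Lset d (Suc 0) = {x \<in> Vsp d. \<forall>i\<in>{1..d-1}. fst x i = 0}"
| "Lset d (Suc (Suc n)) =
     {x \<in> Lset d (Suc n). \<forall>k\<in>{1..d - (n+2)}. snd x k (d - (n+2) + 2) = 0}"

definition hfun :: "nat \<Rightarrow> nat \<Rightarrow> pt \<Rightarrow> complex" where
  "hfun d i x = (if i = 1 then (\<Sum>j=1..d. (fst x j)^2)
                 else (\<Sum>k=1..d-i+1. (snd x k (d-i+2))^2))"

definition finv :: "nat \<Rightarrow> nat \<Rightarrow> pt \<Rightarrow> complex option" where
  "finv d i = (if i = 1 then ratfun_of d (hfun d 1) (\<lambda>_. 1)
     else (THE g. is_ratfun d UNIV g \<and> invariant d UNIV g
            \<and> (\<exists>x\<in>Lset d (i-1). g x \<noteq> None)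
            \<and> (\<forall>x\<in>Lset d (i-1). g x \<noteq> None \<longrightarrow> g x = Some (hfun d i x))))"

definition U_C :: "nat \<Rightarrow> pt set" where
  "U_C d = {x \<in> Vsp d. (\<forall>k\<in>{1..d}. finv d k x \<noteq> None)
                     \<and> (\<Prod>k=1..d. the (finv d k x)) \<noteq> 0}"

definition U_R :: "nat \<Rightarrow> pt set" where
  "U_R d = U_C d \<inter> VR d"

definition zariski_open_R :: "nat \<Rightarrow> pt set \<Rightarrow> bool" where
  "zariski_open_R d U = (U \<subseteq> VR d \<and> (\<exists>S. (\<forall>p\<in>S. poly_fun d \<real> p)
                          \<and> VR d - U = {x \<in> VR d. \<forall>p\<in>S. p x = 0}))"

end

theory Submission
  imports Defs "Jordan_Normal_Form.Determinant" "HOL-Computational_Algebra.Polynomial"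
begin

text \<open>For a point \<open>(v, M)\<close> put \<open>r\<^sub>0 = 0\<close>, \<open>r\<^sub>1 = v\<close> and
  \<open>r\<^sub>k\<^sub>+\<^sub>2 = p\<^sub>k M r\<^sub>k\<^sub>+\<^sub>1 + n\<^sub>k\<^sub>+\<^sub>1 r\<^sub>k\<close>, where \<open>n\<^sub>k = r\<^sub>k \<cdot> r\<^sub>k\<close> and
  \<open>p\<^sub>k = n\<^sub>1 \<cdots> n\<^sub>k\<close>: the Lanczos recursion for the skew matrix \<open>M\<close> with its denominators
  cleared. The \<open>r\<^sub>k\<close> are pairwise orthogonal, polynomial with real coefficients and
  \<open>O\<^sub>d\<close>-equivariant, so the \<open>n\<^sub>k\<close> are real invariant polynomials. On \<open>L\<^sup>(\<^sup>i\<^sup>-\<^sup>1\<^sup>)\<close> the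
  vector \<open>r\<^sub>k\<close> (\<open>k < i\<close>) is a multiple of \<open>e\<^sub>d\<^sub>+\<^sub>1\<^sub>-\<^sub>k\<close>, and this gives
  \<open>n\<^sub>i = h\<^sub>i n\<^sub>i\<^sub>-\<^sub>1 p\<^sub>i\<^sub>-\<^sub>2\<^sup>2\<close> there, \<open>h\<^sub>i\<close> being the prescribed restriction of \<open>f\<^sub>i\<close>.
  Conversely, when no \<open>n\<^sub>k\<close> vanishes, the orthogonal matrix with rows
  \<open>r\<^sub>d\<^sub>+\<^sub>1\<^sub>-\<^sub>a / \<surd>n\<^sub>d\<^sub>+\<^sub>1\<^sub>-\<^sub>a\<close> moves the point into \<open>L\<^sup>(\<^sup>d\<^sup>-\<^sup>1\<^sup>)\<close>. So an invariant
  rational function is determined by its restriction to \<open>L\<^sup>(\<^sup>i\<^sup>-\<^sup>1\<^sup>)\<close>, whence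
  \<open>f\<^sub>i = n\<^sub>i / (n\<^sub>i\<^sub>-\<^sub>1 p\<^sub>i\<^sub>-\<^sub>2\<^sup>2)\<close> and \<open>U\<^sub>d\<close> is the locus where no \<open>n\<^sub>k\<close> vanishes. At a
  real point the \<open>n\<^sub>k\<close> are sums of real squares, so that matrix is real.\<close>

section \<open>Polynomial and rational functions\<close>

lemma poly_fun_mono: "poly_fun d K p \<Longrightarrow> K \<subseteq> K' \<Longrightarrow> poly_fun d K' p"
  by (induction rule: poly_fun.induct) (auto intro: poly_fun.intros)

lemma poly_fun_sum:
  assumes "0 \<in> K" "\<And>a. a \<in> F \<Longrightarrow> poly_fun d K (f a)"
  shows "poly_fun d K (\<lambda>x. \<Sum>a\<in>F. f a x)"
proof (cases "finite F")
  case True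
  from this assms(2) show ?thesis
    by (induction F rule: finite_induct) (auto intro: poly_fun.intros assms(1))
qed (simp add: poly_fun.const assms(1))

lemma poly_fun_prod:
  assumes "1 \<in> K" "\<And>a. a \<in> F \<Longrightarrow> poly_fun d K (f a)"
  shows "poly_fun d K (\<lambda>x. \<Prod>a\<in>F. f a x)"
proof (cases "finite F")
  case True
  from this assms(2) show ?thesis
    by (induction F rule: finite_induct) (auto intro: poly_fun.intros assms(1))
qed (simp add: poly_fun.const assms(1))

lemma poly_fun_uminus: "-1 \<in> K \<Longrightarrow> poly_fun d K p \<Longrightarrow> poly_fun d K (\<lambda>x. - p x)"
  using poly_fun.mult[OF poly_fun.const, of "-1" K d p] by simp

lemma poly_fun_diff:
  "-1 \<in> K \<Longrightarrow> poly_fun d K p \<Longrightarrow> poly_fun d K q \<Longrightarrow> poly_fun d K (\<lambda>x. p x - q x)"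
  using poly_fun.add[OF _ poly_fun_uminus, of d K p q] by simp

lemma poly_fun_power: "1 \<in> K \<Longrightarrow> poly_fun d K p \<Longrightarrow> poly_fun d K (\<lambda>x. p x ^ n)"
  by (induction n) (auto intro: poly_fun.intros)

lemma mem_Vsp_iff: "x \<in> Vsp d \<longleftrightarrow> (\<forall>i. i \<notin> {1..d} \<longrightarrow> fst x i = 0)
    \<and> (\<forall>i j. i \<notin> {1..d} \<or> j \<notin> {1..d} \<longrightarrow> snd x i j = 0) \<and> (\<forall>i j. snd x j i = - snd x i j)"
  by (cases x) (simp only: Vsp_def mem_Collect_eq case_prod_conv fst_conv snd_conv)

lemma mem_VR_iff: "x \<in> VR d \<longleftrightarrow> x \<in> Vsp d \<and> (\<forall>i. fst x i \<in> \<real>) \<and> (\<forall>i j. snd x i j \<in> \<real>)"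
  by (cases x) (simp add: VR_def)

text \<open>Only the coordinates \<open>c\<^sub>a\<^sub>b\<close> with \<open>a < b\<close> are polynomial functions, so the
  skew matrix is read off from them.\<close>
definition skew_entry :: "pt \<Rightarrow> nat \<Rightarrow> nat \<Rightarrow> complex" where
  "skew_entry x a b = (if a < b then snd x a b else if b < a then - snd x b a else 0)"

lemma skew_entry_swap: "skew_entry x b a = - skew_entry x a b"
  unfolding skew_entry_def by auto

lemma skew_entry_eq:
  assumes "x \<in> Vsp d" shows "skew_entry x a b = snd x a b"
proof -
  have "\<And>i j. snd x j i = - snd x i j" using assms unfolding mem_Vsp_iff by blast
  from this[of a b] this[of a a] show ?thesis unfolding skew_entry_def by auto
qed

lemma poly_fun_skew_entry:
  "-1 \<in> K \<Longrightarrow> 0 \<in> K \<Longrightarrow> a \<in> {1..d} \<Longrightarrow> b \<in> {1..d} \<Longrightarrow> poly_fun d K (\<lambda>x. skew_entry x a b)"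
  by (cases a b rule: linorder_cases)
    (auto simp: skew_entry_def intro!: poly_fun.intros poly_fun_uminus)

definition affine_line :: "pt \<Rightarrow> pt \<Rightarrow> complex \<Rightarrow> pt" where
  "affine_line x y t =
    (\<lambda>i. fst x i + t * (fst y i - fst x i), \<lambda>i j. snd x i j + t * (snd y i j - snd x i j))"

lemma affine_line_0: "affine_line x y 0 = x"
  and affine_line_1: "affine_line x y 1 = y"
  by (simp_all add: affine_line_def)

definition affine_closed :: "pt set \<Rightarrow> bool" where
  "affine_closed S \<longleftrightarrow> (\<forall>x\<in>S. \<forall>y\<in>S. \<forall>t. affine_line x y t \<in> S)"

lemma poly_fun_affine_line: "poly_fun d K p \<Longrightarrow> \<exists>P. \<forall>t. p (affine_line x y t) = poly P t"
proof (induction rule: poly_fun.induct)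
  case (const c)
  show ?case by (intro exI[of _ "[:c:]"]) simp
next
  case (coord_v i)
  show ?case by (intro exI[of _ "[:fst x i, fst y i - fst x i:]"]) (simp add: affine_line_def)
next
  case (coord_M i j)
  show ?case
    by (intro exI[of _ "[:snd x i j, snd y i j - snd x i j:]"]) (simp add: affine_line_def)
next
  case (add p q)
  then obtain P Q where "\<forall>t. p (affine_line x y t) = poly P t" "\<forall>t. q (affine_line x y t) = poly Q t"
    by blast
  then show ?case by (intro exI[of _ "P + Q"]) simp
next
  case (mult p q)
  then obtain P Q where "\<forall>t. p (affine_line x y t) = poly P t" "\<forall>t. q (affine_line x y t) = poly Q t"
    by blast
  then show ?case by (intro exI[of _ "P * Q"]) simp
qed

text \<open>On the line through \<open>y\<close> and \<open>y0\<close> the product becomes a product of univariate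
  polynomials, the second of which is nonzero at \<open>y0\<close>.\<close>
lemma poly_fun_mult_eq_0_imp_eq_0:
  assumes S: "affine_closed S" and p: "poly_fun d K p" and q: "poly_fun d K' q"
    and pq: "\<And>y. y \<in> S \<Longrightarrow> p y * q y = 0" and y0: "y0 \<in> S" "q y0 \<noteq> 0" and y: "y \<in> S"
  shows "p y = 0"
proof -
  obtain P where P: "\<forall>t. p (affine_line y y0 t) = poly P t" using poly_fun_affine_line[OF p] by blast
  obtain Q where Q: "\<forall>t. q (affine_line y y0 t) = poly Q t" using poly_fun_affine_line[OF q] by blast
  have "\<forall>t. poly (P * Q) t = 0"
    using P Q pq S y y0 unfolding affine_closed_def by (metis poly_mult)
  then have "P * Q = 0" using poly_all_0_iff_0 by blast
  moreover have "poly Q 1 \<noteq> 0" using Q y0 affine_line_1 by metis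
  ultimately have "P = 0" by auto
  then show ?thesis using P affine_line_0 by (metis poly_0)
qed

lemma affine_closed_Vsp: "affine_closed (Vsp d)"
  unfolding affine_closed_def
proof (intro ballI allI)
  fix x y t assume x: "x \<in> Vsp d" and y: "y \<in> Vsp d"
  have v: "\<forall>i. i \<notin> {1..d} \<longrightarrow> fst x i = 0 \<and> fst y i = 0"
    and M: "\<forall>i j. i \<notin> {1..d} \<or> j \<notin> {1..d} \<longrightarrow> snd x i j = 0 \<and> snd y i j = 0"
    and skew: "\<And>i j. snd x j i = - snd x i j" "\<And>i j. snd y j i = - snd y i j"
    using x y unfolding mem_Vsp_iff by blast+
  show "affine_line x y t \<in> Vsp d"
    unfolding mem_Vsp_iff
  proof (intro conjI allI impI)
    fix i j
    show "snd (affine_line x y t) j i = - snd (affine_line x y t) i j"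
      unfolding affine_line_def by (simp add: skew[of i j] algebra_simps)
  qed (use v M in \<open>simp_all add: affine_line_def\<close>)
qed

lemma ratfun_reps_cross_eq:
  assumes "poly_fun d UNIV Q" "y0 \<in> Vsp d" "Q y0 \<noteq> 0"
    and "poly_fun d UNIV P1" "poly_fun d UNIV Q1" "\<forall>y\<in>Vsp d. P y * Q1 y = P1 y * Q y"
    and "poly_fun d UNIV P2" "poly_fun d UNIV Q2" "\<forall>y\<in>Vsp d. P y * Q2 y = P2 y * Q y"
    and "x \<in> Vsp d"
  shows "P1 x * Q2 x = P2 x * Q1 x"
proof -
  have "P1 x * Q2 x - P2 x * Q1 x = 0"
  proof (rule poly_fun_mult_eq_0_imp_eq_0[OF affine_closed_Vsp _ assms(1) _ assms(2,3,10)])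
    show "poly_fun d UNIV (\<lambda>y. P1 y * Q2 y - P2 y * Q1 y)"
      using assms by (auto intro!: poly_fun_diff poly_fun.mult)
    fix y assume "y \<in> Vsp d"
    then have "(P1 y * Q2 y - P2 y * Q1 y) * Q y = (P y * Q1 y) * Q2 y - (P y * Q2 y) * Q1 y"
      using assms(6,9) by (simp add: algebra_simps)
    then show "(P1 y * Q2 y - P2 y * Q1 y) * Q y = 0" by (simp add: algebra_simps)
  qed
  then show ?thesis by simp
qed

lemma ratfun_of_eq_Some:
  assumes "poly_fun d UNIV Q" "y0 \<in> Vsp d" "Q y0 \<noteq> 0"
    and "poly_fun d UNIV P1" "poly_fun d UNIV Q1" "\<forall>y\<in>Vsp d. P y * Q1 y = P1 y * Q y"
    and "x \<in> Vsp d" "Q1 x \<noteq> 0"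
  shows "ratfun_of d P Q x = Some (P1 x / Q1 x)"
proof -
  have "(THE c. \<exists>P' Q'. poly_fun d UNIV P' \<and> poly_fun d UNIV Q'
            \<and> (\<forall>y\<in>Vsp d. P y * Q' y = P' y * Q y) \<and> Q' x \<noteq> 0 \<and> c = P' x / Q' x) = P1 x / Q1 x"
  proof (rule the_equality)
    fix c assume "\<exists>P' Q'. poly_fun d UNIV P' \<and> poly_fun d UNIV Q'
            \<and> (\<forall>y\<in>Vsp d. P y * Q' y = P' y * Q y) \<and> Q' x \<noteq> 0 \<and> c = P' x / Q' x"
    then obtain P2 Q2 where "poly_fun d UNIV P2" "poly_fun d UNIV Q2"
      "\<forall>y\<in>Vsp d. P y * Q2 y = P2 y * Q y" "Q2 x \<noteq> 0" "c = P2 x / Q2 x" by blast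
    moreover from this have "P1 x * Q2 x = P2 x * Q1 x"
      using ratfun_reps_cross_eq[OF assms(1-6)] assms(7) by blast
    ultimately have "c * Q1 x * Q2 x = P1 x * Q2 x" by (simp add: field_simps)
    then show "c = P1 x / Q1 x" using assms(8) \<open>Q2 x \<noteq> 0\<close> by (simp add: field_simps)
  qed (use assms in blast)
  then show ?thesis unfolding ratfun_of_def using assms by auto
qed

lemma ratfun_of_not_None_D:
  assumes "ratfun_of d P Q x \<noteq> None"
  obtains P' Q' where "x \<in> Vsp d" "poly_fun d UNIV P'" "poly_fun d UNIV Q'"
    "\<forall>y\<in>Vsp d. P y * Q' y = P' y * Q y" "Q' x \<noteq> 0"
  using assms unfolding ratfun_of_def by (auto split: if_splits)

lemma ratfun_of_eq_quotient:
  "poly_fun d UNIV P \<Longrightarrow> poly_fun d UNIV Q \<Longrightarrow> x \<in> Vsp d \<Longrightarrow> Q x \<noteq> 0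
    \<Longrightarrow> ratfun_of d P Q x = Some (P x / Q x)"
  by (rule ratfun_of_eq_Some) auto

lemma ratfun_of_cong_at:
  assumes "poly_fun d UNIV P" "poly_fun d UNIV Q" "poly_fun d UNIV P'" "poly_fun d UNIV Q'"
    and "y0 \<in> Vsp d" "Q y0 \<noteq> 0" "y1 \<in> Vsp d" "Q' y1 \<noteq> 0"
    and "\<forall>y\<in>Vsp d. P y * Q' y = P' y * Q y" and "ratfun_of d P Q x \<noteq> None"
  shows "ratfun_of d P' Q' x = ratfun_of d P Q x"
proof -
  obtain P1 Q1 where x: "x \<in> Vsp d" and rep: "poly_fun d UNIV P1" "poly_fun d UNIV Q1"
      "\<forall>y\<in>Vsp d. P y * Q1 y = P1 y * Q y" "Q1 x \<noteq> 0"
    using assms(10) by (rule ratfun_of_not_None_D)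
  have "\<forall>y\<in>Vsp d. P' y * Q1 y = P1 y * Q' y"
    using ratfun_reps_cross_eq[OF assms(2,5,6) assms(3,4,9) rep(1-3)] by (simp add: mult.commute)
  then have "ratfun_of d P' Q' x = Some (P1 x / Q1 x)"
    by (rule ratfun_of_eq_Some[OF assms(4,7,8) rep(1,2) _ x rep(4)])
  also have "\<dots> = ratfun_of d P Q x"
    using ratfun_of_eq_Some[OF assms(2,5,6) rep(1-3) x rep(4)] by simp
  finally show ?thesis .
qed

lemma ratfun_of_cong:
  assumes "poly_fun d UNIV P" "poly_fun d UNIV Q" "poly_fun d UNIV P'" "poly_fun d UNIV Q'"
    and "y0 \<in> Vsp d" "Q y0 \<noteq> 0" "y1 \<in> Vsp d" "Q' y1 \<noteq> 0"
    and "\<forall>y\<in>Vsp d. P y * Q' y = P' y * Q y"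
  shows "ratfun_of d P' Q' = ratfun_of d P Q"
proof
  fix x
  have "\<forall>y\<in>Vsp d. P' y * Q y = P y * Q' y" using assms(9) by (simp add: mult.commute)
  then show "ratfun_of d P' Q' x = ratfun_of d P Q x"
    using ratfun_of_cong_at[OF assms, of x] ratfun_of_cong_at[OF assms(3,4,1,2,7,8,5,6), of x]
    by fastforce
qed

section \<open>Orthogonal matrices and their action\<close>

lemma Orth_mono: "A \<in> Orth d K \<Longrightarrow> K \<subseteq> K' \<Longrightarrow> A \<in> Orth d K'"
  unfolding Orth_def by blast

lemma Orth_eq_0: "A \<in> Orth d K \<Longrightarrow> i \<notin> {1..d} \<or> j \<notin> {1..d} \<Longrightarrow> A i j = 0"
  unfolding Orth_def by blast

lemma sum_shift_Suc: "(\<Sum>j<d. f (Suc j)) = (\<Sum>j=1..d. f j :: 'a::comm_monoid_add)"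
  by (simp add: atLeastLessThanSuc_atLeastAtMost lessThan_atLeast0 sum.shift_bounds_Suc_ivl[symmetric])

lemma Orth_orthonormal_cols:
  assumes A: "A \<in> Orth d K" and i: "i \<in> {1..d}" and k: "k \<in> {1..d}"
  shows "(\<Sum>j=1..d. A j i * A j k) = (if i = k then 1 else 0)"
proof -
  define B where "B = mat d d (\<lambda>(i, j). A (Suc i) (Suc j))"
  have B: "B \<in> carrier_mat d d" unfolding B_def by simp
  have "B * transpose_mat B = 1\<^sub>m d"
  proof (rule eq_matI)
    fix a b assume "a < dim_row (1\<^sub>m d :: complex mat)" "b < dim_col (1\<^sub>m d :: complex mat)"
    then have ab: "a < d" "b < d" by auto
    have "(B * transpose_mat B) $$ (a, b) = (\<Sum>j<d. A (Suc a) (Suc j) * A (Suc b) (Suc j))"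
      using ab B unfolding B_def by (simp add: scalar_prod_def atLeast0LessThan)
    also have "\<dots> = (\<Sum>j=1..d. A (Suc a) j * A (Suc b) j)" by (rule sum_shift_Suc)
    also have "\<dots> = (if Suc a = Suc b then 1 else 0)" using A ab unfolding Orth_def by auto
    finally show "(B * transpose_mat B) $$ (a, b) = 1\<^sub>m d $$ (a, b)" using ab by simp
  qed (use B in auto)
  then have BB: "transpose_mat B * B = 1\<^sub>m d"
    using mat_mult_left_right_inverse[OF B transpose_carrier_mat[THEN iffD2, OF B]] by simp
  obtain a b where ab: "i = Suc a" "a < d" "k = Suc b" "b < d"
    using i k by (cases i; cases k) auto
  have "(transpose_mat B * B) $$ (a, b) = (\<Sum>j<d. A (Suc j) (Suc a) * A (Suc j) (Suc b))"
    using ab B unfolding B_def by (simp add: scalar_prod_def atLeast0LessThan)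
  also have "\<dots> = (\<Sum>j=1..d. A j (Suc a) * A j (Suc b))" by (rule sum_shift_Suc)
  finally show ?thesis using BB ab by simp
qed

lemma Orth_transpose: "A \<in> Orth d K \<Longrightarrow> (\<lambda>i j. A j i) \<in> Orth d K"
  using Orth_orthonormal_cols unfolding Orth_def by auto

definition mat_vec :: "nat \<Rightarrow> (nat \<Rightarrow> nat \<Rightarrow> complex) \<Rightarrow> (nat \<Rightarrow> complex) \<Rightarrow> nat \<Rightarrow> complex" where
  "mat_vec d A u = (\<lambda>a. \<Sum>b=1..d. A a b * u b)"

lemma Orth_transpose_mat_vec:
  assumes A: "A \<in> Orth d K" and i: "i \<in> {1..d}"
  shows "(\<Sum>j=1..d. A j i * mat_vec d A u j) = u i"
proof -
  have "(\<Sum>j=1..d. A j i * mat_vec d A u j) = (\<Sum>j=1..d. \<Sum>p=1..d. A j i * A j p * u p)"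
    unfolding mat_vec_def by (simp add: sum_distrib_left mult.assoc)
  also have "\<dots> = (\<Sum>p=1..d. \<Sum>j=1..d. A j i * A j p * u p)" by (rule sum.swap)
  also have "\<dots> = (\<Sum>p=1..d. (if i = p then u p else 0))"
  proof (intro sum.cong refl)
    fix p assume "p \<in> {1..d}"
    then show "(\<Sum>j=1..d. A j i * A j p * u p) = (if i = p then u p else 0)"
      using Orth_orthonormal_cols[OF A i, of p] by (simp add: sum_distrib_right[symmetric])
  qed
  also have "\<dots> = u i" using i by simp
  finally show ?thesis .
qed

lemma fst_act: "fst (act d A x) = mat_vec d A (fst x)"
  and snd_act: "snd (act d A x) i k = (\<Sum>j=1..d. \<Sum>l=1..d. A i j * snd x j l * A k l)"
  by (simp_all add: act_def mat_vec_def split: prod.split)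

lemma act_Vsp:
  assumes A: "A \<in> Orth d K" and x: "x \<in> Vsp d"
  shows "act d A x \<in> Vsp d"
  unfolding mem_Vsp_iff
proof (intro conjI allI impI)
  fix i k
  have skew: "snd x j l = - snd x l j" for j l using x unfolding mem_Vsp_iff by blast
  have "snd (act d A x) k i = (\<Sum>l=1..d. \<Sum>j=1..d. A k j * snd x j l * A i l)"
    unfolding snd_act by (rule sum.swap)
  also have "\<dots> = (\<Sum>l=1..d. \<Sum>j=1..d. - (A i l * snd x l j * A k j))"
  proof (intro sum.cong refl)
    fix l j show "A k j * snd x j l * A i l = - (A i l * snd x l j * A k j)" using skew[of j l] by simp
  qed
  finally show "snd (act d A x) k i = - snd (act d A x) i k"
    by (simp add: snd_act sum_negf)
qed (use Orth_eq_0[OF A] in \<open>auto simp: fst_act snd_act mat_vec_def\<close>)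

lemma act_VR:
  assumes A: "A \<in> Orth d \<real>" and x: "x \<in> VR d"
  shows "act d A x \<in> VR d"
proof -
  have "A i j \<in> \<real>" "fst x i \<in> \<real>" "snd x i j \<in> \<real>" for i j
    using A x unfolding Orth_def mem_VR_iff by auto
  then show ?thesis
    using act_Vsp[OF A] x unfolding mem_VR_iff fst_act snd_act mat_vec_def
    by (auto intro!: sum_in_Reals Reals_mult)
qed

lemma snd_act_eq_mat_vec: "snd (act d A x) i k = mat_vec d A (\<lambda>q. \<Sum>p=1..d. A i p * snd x p q) k"
  unfolding snd_act mat_vec_def by (subst sum.swap) (simp add: sum_distrib_left sum_distrib_right mult_ac)

lemma Orth_transpose_conj:
  assumes A: "A \<in> Orth d K" and i: "i \<in> {1..d}" and k: "k \<in> {1..d}"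
  shows "(\<Sum>j=1..d. \<Sum>l=1..d. A j i * snd (act d A x) j l * A l k) = snd x i k"
proof -
  have "(\<Sum>j=1..d. \<Sum>l=1..d. A j i * snd (act d A x) j l * A l k)
      = (\<Sum>j=1..d. A j i * (\<Sum>l=1..d. A l k * mat_vec d A (\<lambda>q. \<Sum>p=1..d. A j p * snd x p q) l))"
    unfolding snd_act_eq_mat_vec by (simp add: sum_distrib_left mult_ac)
  also have "\<dots> = (\<Sum>j=1..d. A j i * mat_vec d A (\<lambda>p. snd x p k) j)"
    using Orth_transpose_mat_vec[OF A k] by (simp add: mat_vec_def)
  also have "\<dots> = snd x i k" by (rule Orth_transpose_mat_vec[OF A i])
  finally show ?thesis .
qed

lemma act_transpose_act:
  assumes A: "A \<in> Orth d K" and x: "x \<in> Vsp d"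
  shows "act d (\<lambda>i j. A j i) (act d A x) = x"
proof (rule prod_eqI)
  have out: "A i j = 0" if "i \<notin> {1..d} \<or> j \<notin> {1..d}" for i j using Orth_eq_0[OF A that] .
  have x_out: "\<forall>i. i \<notin> {1..d} \<longrightarrow> fst x i = 0"
    "\<forall>i k. i \<notin> {1..d} \<or> k \<notin> {1..d} \<longrightarrow> snd x i k = 0"
    using x unfolding mem_Vsp_iff by blast+
  have tr: "mat_vec d (\<lambda>i j. A j i) w i = (\<Sum>j=1..d. A j i * w j)" for w i
    by (simp add: mat_vec_def)
  show "fst (act d (\<lambda>i j. A j i) (act d A x)) = fst x"
  proof
    fix i
    show "fst (act d (\<lambda>i j. A j i) (act d A x)) i = fst x i"
    proof (cases "i \<in> {1..d}")
      case True
      then show ?thesis unfolding fst_act tr by (rule Orth_transpose_mat_vec[OF A])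
    qed (use out x_out in \<open>simp add: fst_act tr\<close>)
  qed
  show "snd (act d (\<lambda>i j. A j i) (act d A x)) = snd x"
  proof (intro ext)
    fix i k
    show "snd (act d (\<lambda>i j. A j i) (act d A x)) i k = snd x i k"
    proof (cases "i \<in> {1..d} \<and> k \<in> {1..d}")
      case True
      then show ?thesis using Orth_transpose_conj[OF A] by (simp add: snd_act[of d "\<lambda>i j. A j i"])
    qed (use out x_out in \<open>auto simp: snd_act\<close>)
  qed
qed

section \<open>Lanczos vectors\<close>

definition dot :: "nat \<Rightarrow> (nat \<Rightarrow> complex) \<Rightarrow> (nat \<Rightarrow> complex) \<Rightarrow> complex" where
  "dot d u w = (\<Sum>j=1..d. u j * w j)"

definition skew_mult :: "nat \<Rightarrow> pt \<Rightarrow> (nat \<Rightarrow> complex) \<Rightarrow> nat \<Rightarrow> complex" where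
  "skew_mult d x u = (\<lambda>a. \<Sum>b=1..d. skew_entry x a b * u b)"

lemma dot_commute: "dot d u w = dot d w u"
  unfolding dot_def by (simp add: mult.commute)

lemma dot_zero_left [simp]: "dot d (\<lambda>_. 0) w = 0"
  unfolding dot_def by simp

lemma dot_linear_left: "dot d (\<lambda>i. a * f i + b * g i) w = a * dot d f w + b * dot d g w"
  unfolding dot_def by (simp add: sum.distrib sum_distrib_left algebra_simps)

lemma dot_linear_right: "dot d w (\<lambda>i. a * f i + b * g i) = a * dot d w f + b * dot d w g"
  using dot_linear_left dot_commute by metis

lemma dot_cong:
  "(\<And>i. i \<in> {1..d} \<Longrightarrow> u i = u' i) \<Longrightarrow> (\<And>i. i \<in> {1..d} \<Longrightarrow> w i = w' i) \<Longrightarrow> dot d u w = dot d u' w'"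
  unfolding dot_def by (intro sum.cong) auto

lemma skew_mult_cong: "(\<And>i. i \<in> {1..d} \<Longrightarrow> u i = u' i) \<Longrightarrow> skew_mult d x u = skew_mult d x u'"
  unfolding skew_mult_def by (intro ext sum.cong) auto

lemma dot_skew_mult: "dot d (skew_mult d x u) w = - dot d u (skew_mult d x w)"
proof -
  have "dot d (skew_mult d x u) w = (\<Sum>a=1..d. \<Sum>b=1..d. skew_entry x a b * u b * w a)"
    unfolding dot_def skew_mult_def by (simp add: sum_distrib_right)
  also have "\<dots> = (\<Sum>b=1..d. \<Sum>a=1..d. skew_entry x a b * u b * w a)" by (rule sum.swap)
  also have "\<dots> = (\<Sum>b=1..d. \<Sum>a=1..d. - (u b * (skew_entry x b a * w a)))"
  proof (intro sum.cong refl)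
    fix a b show "skew_entry x a b * u b * w a = - (u b * (skew_entry x b a * w a))"
      using skew_entry_swap[of x b a] by simp
  qed
  also have "\<dots> = - dot d u (skew_mult d x w)"
    unfolding dot_def skew_mult_def by (simp add: sum_negf sum_distrib_left)
  finally show ?thesis .
qed

lemma dot_skew_mult_self: "dot d (skew_mult d x u) u = 0"
  using dot_skew_mult[of d x u u] dot_commute[of d u] by simp

text \<open>The state after \<open>k\<close> steps is \<open>(r\<^sub>k, r\<^sub>k\<^sub>+\<^sub>1, p\<^sub>k)\<close>.\<close>
primrec lanczos_state :: "nat \<Rightarrow> pt \<Rightarrow> nat \<Rightarrow> (nat \<Rightarrow> complex) \<times> (nat \<Rightarrow> complex) \<times> complex" where
  "lanczos_state d x 0 = (\<lambda>_. 0, fst x, 1)"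
| "lanczos_state d x (Suc k) = (case lanczos_state d x k of (r, r', p) \<Rightarrow>
     (r', \<lambda>i. p * skew_mult d x r' i + dot d r' r' * r i, p * dot d r' r'))"

definition lanczos_vec :: "nat \<Rightarrow> pt \<Rightarrow> nat \<Rightarrow> nat \<Rightarrow> complex" where
  "lanczos_vec d x k = fst (lanczos_state d x k)"

definition lanczos_norm :: "nat \<Rightarrow> pt \<Rightarrow> nat \<Rightarrow> complex" where
  "lanczos_norm d x k = dot d (lanczos_vec d x k) (lanczos_vec d x k)"

definition lanczos_coeff :: "nat \<Rightarrow> pt \<Rightarrow> nat \<Rightarrow> complex" where
  "lanczos_coeff d x k = (\<Prod>l=1..k. lanczos_norm d x l)"

lemma lanczos_coeff_0 [simp]: "lanczos_coeff d x 0 = 1"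
  by (simp add: lanczos_coeff_def)

lemma lanczos_coeff_Suc: "lanczos_coeff d x (Suc k) = lanczos_coeff d x k * lanczos_norm d x (Suc k)"
  by (simp add: lanczos_coeff_def prod.cl_ivl_Suc)

lemma lanczos_coeff_eq_0_iff: "lanczos_coeff d x k = 0 \<longleftrightarrow> (\<exists>l\<in>{1..k}. lanczos_norm d x l = 0)"
  by (simp add: lanczos_coeff_def)

lemma lanczos_coeff_eq_0_mono: "lanczos_coeff d x j = 0 \<Longrightarrow> j \<le> k \<Longrightarrow> lanczos_coeff d x k = 0"
  by (auto simp: lanczos_coeff_eq_0_iff)

lemma lanczos_state_eq:
  "lanczos_state d x k = (lanczos_vec d x k, lanczos_vec d x (Suc k), lanczos_coeff d x k)"
proof (induction k)
  case (Suc k)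
  have "snd (snd (lanczos_state d x (Suc k))) = lanczos_coeff d x (Suc k)"
    by (simp add: Suc.IH lanczos_coeff_Suc lanczos_norm_def)
  moreover have "fst (snd (lanczos_state d x (Suc k))) = lanczos_vec d x (Suc (Suc k))"
    by (simp add: lanczos_vec_def split: prod.split)
  ultimately show ?case unfolding lanczos_vec_def[of d x "Suc k"] by (metis prod.collapse)
qed (simp add: lanczos_vec_def)

lemma lanczos_vec_0: "lanczos_vec d x 0 = (\<lambda>_. 0)"
  and lanczos_vec_1: "lanczos_vec d x (Suc 0) = fst x"
  by (simp_all add: lanczos_vec_def)

lemma lanczos_vec_Suc_Suc:
  "lanczos_vec d x (Suc (Suc k)) = (\<lambda>i. lanczos_coeff d x k * skew_mult d x (lanczos_vec d x (Suc k)) i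
      + lanczos_norm d x (Suc k) * lanczos_vec d x k i)"
proof -
  have "lanczos_vec d x (Suc (Suc k)) = fst (snd (lanczos_state d x (Suc k)))"
    by (simp add: lanczos_vec_def split: prod.split)
  then show ?thesis by (simp add: lanczos_state_eq[of d x k] lanczos_norm_def)
qed

lemma lanczos_coeff_dot_skew_mult:
  "lanczos_coeff d x k * dot d (skew_mult d x (lanczos_vec d x (Suc k))) w
    = dot d (lanczos_vec d x (Suc (Suc k))) w - lanczos_norm d x (Suc k) * dot d (lanczos_vec d x k) w"
  by (simp add: lanczos_vec_Suc_Suc dot_linear_left)

lemma lanczos_vec_orthogonal_less:
  "j < k \<Longrightarrow> dot d (lanczos_vec d x j) (lanczos_vec d x k) = 0"
proof (induction k arbitrary: j rule: less_induct)
  case (less k)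
  define r where "r = lanczos_vec d x"
  define n where "n = lanczos_norm d x"
  define p where "p = lanczos_coeff d x"
  have IH: "dot d (r a) (r b) = 0" if "a < b" "b < k" for a b
    using less.IH that unfolding r_def by blast
  consider (zero) "j = 0" | (Suc) J K where "j = Suc J" "k = Suc (Suc K)"
  proof (cases j)
    case (Suc J)
    then show ?thesis using that(2)[of J "k - 2"] less.prems by simp
  qed (use that(1) in blast)
  then have "dot d (r j) (r k) = 0"
  proof cases
    case zero
    then show ?thesis by (simp add: r_def lanczos_vec_0)
  next
    case Suc
    have expand: "dot d (r j) (r k) = n (Suc K) * dot d (r j) (r K) - p K * dot d (skew_mult d x (r j)) (r (Suc K))"
      using dot_skew_mult[of d x "r j" "r (Suc K)"]
      unfolding Suc r_def n_def p_def lanczos_vec_Suc_Suc dot_linear_right by simp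
    have step: "p J * dot d (skew_mult d x (r j)) (r (Suc K))
        = dot d (r (Suc j)) (r (Suc K)) - n j * dot d (r J) (r (Suc K))"
      unfolding Suc r_def n_def p_def by (rule lanczos_coeff_dot_skew_mult)
    consider (last) "j = Suc K" | (adjacent) "j = K" | (far) "j < K" using less.prems Suc by linarith
    then show ?thesis
    proof cases
      case last
      then show ?thesis
        using expand IH[of K "Suc K"] Suc dot_skew_mult_self[of d x "r j"] dot_commute[of d "r K"] by simp
    next
      case adjacent
      have "p J * dot d (skew_mult d x (r j)) (r (Suc K)) = n (Suc K)"
        using step IH[of J "Suc K"] Suc adjacent by (simp add: n_def r_def lanczos_norm_def)
      moreover have "p K = p J * n K" using Suc adjacent by (simp add: p_def n_def lanczos_coeff_Suc)
      ultimately show ?thesis using expand adjacent by (simp add: n_def r_def lanczos_norm_def)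
    next
      case far
      have "p J * dot d (skew_mult d x (r j)) (r (Suc K)) = 0"
        using step IH[of "Suc j" "Suc K"] IH[of J "Suc K"] Suc far by simp
      then have "p K * dot d (skew_mult d x (r j)) (r (Suc K)) = 0"
        using lanczos_coeff_eq_0_mono[of d x J K] Suc far unfolding p_def by auto
      then show ?thesis using expand IH[of j K] Suc far by simp
    qed
  qed
  then show ?case by (simp add: r_def)
qed

lemma lanczos_vec_orthogonal:
  "j \<noteq> k \<Longrightarrow> dot d (lanczos_vec d x j) (lanczos_vec d x k) = 0"
  using lanczos_vec_orthogonal_less dot_commute by (metis linorder_neqE_nat)

lemma poly_fun_dot:
  assumes "0 \<in> K" "\<And>j. j \<in> {1..d} \<Longrightarrow> poly_fun d K (\<lambda>x. u x j)"
    "\<And>j. j \<in> {1..d} \<Longrightarrow> poly_fun d K (\<lambda>x. w x j)"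
  shows "poly_fun d K (\<lambda>x. dot d (u x) (w x))"
  unfolding dot_def using assms by (auto intro!: poly_fun_sum poly_fun.mult)

lemma poly_fun_skew_mult:
  assumes "-1 \<in> K" "0 \<in> K" "i \<in> {1..d}" "\<And>j. j \<in> {1..d} \<Longrightarrow> poly_fun d K (\<lambda>x. u x j)"
  shows "poly_fun d K (\<lambda>x. skew_mult d x (u x) i)"
  unfolding skew_mult_def using assms by (auto intro!: poly_fun_sum poly_fun.mult poly_fun_skew_entry)

lemma poly_fun_lanczos_state:
  "(\<forall>j\<in>{1..d}. poly_fun d \<real> (\<lambda>x. lanczos_vec d x k j) \<and> poly_fun d \<real> (\<lambda>x. lanczos_vec d x (Suc k) j))
    \<and> poly_fun d \<real> (\<lambda>x. lanczos_coeff d x k)"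
proof (induction k)
  case 0
  show ?case by (auto simp: lanczos_vec_0 lanczos_vec_1 intro: poly_fun.intros)
next
  case (Suc k)
  then have r: "\<And>j. j \<in> {1..d} \<Longrightarrow> poly_fun d \<real> (\<lambda>x. lanczos_vec d x k j)"
    and r': "\<And>j. j \<in> {1..d} \<Longrightarrow> poly_fun d \<real> (\<lambda>x. lanczos_vec d x (Suc k) j)"
    and p: "poly_fun d \<real> (\<lambda>x. lanczos_coeff d x k)" by blast+
  have n: "poly_fun d \<real> (\<lambda>x. lanczos_norm d x (Suc k))"
    unfolding lanczos_norm_def by (rule poly_fun_dot) (use r' in auto)
  show ?case unfolding lanczos_vec_Suc_Suc lanczos_coeff_Suc
    using r r' p n by (auto intro!: poly_fun.add poly_fun.mult poly_fun_skew_mult)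
qed

lemma poly_fun_lanczos_vec: "j \<in> {1..d} \<Longrightarrow> poly_fun d \<real> (\<lambda>x. lanczos_vec d x k j)"
  using poly_fun_lanczos_state by blast

lemma poly_fun_lanczos_norm: "poly_fun d \<real> (\<lambda>x. lanczos_norm d x k)"
  unfolding lanczos_norm_def by (rule poly_fun_dot) (auto intro: poly_fun_lanczos_vec)

lemma poly_fun_lanczos_coeff: "poly_fun d \<real> (\<lambda>x. lanczos_coeff d x k)"
  using poly_fun_lanczos_state by blast

lemma lanczos_state_real:
  assumes x: "x \<in> VR d"
  shows "(\<forall>j. lanczos_vec d x k j \<in> \<real> \<and> lanczos_vec d x (Suc k) j \<in> \<real>) \<and> lanczos_coeff d x k \<in> \<real>"
proof (induction k)
  case 0
  show ?case using x by (simp add: lanczos_vec_0 lanczos_vec_1 mem_VR_iff)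
next
  case (Suc k)
  have skew_mult: "skew_mult d x u a \<in> \<real>" if "\<And>b. u b \<in> \<real>" for u a
    using x that unfolding mem_VR_iff skew_mult_def skew_entry_def
    by (auto intro!: sum_in_Reals Reals_mult)
  have dot: "dot d u w \<in> \<real>" if "\<And>b. u b \<in> \<real>" "\<And>b. w b \<in> \<real>" for u w
    using that unfolding dot_def by (auto intro!: sum_in_Reals Reals_mult)
  show ?case using Suc skew_mult dot
    unfolding lanczos_vec_Suc_Suc lanczos_coeff_Suc lanczos_norm_def by (auto intro!: Reals_add Reals_mult)
qed

lemma csqrt_lanczos_norm_real:
  assumes x: "x \<in> VR d"
  shows "csqrt (lanczos_norm d x k) \<in> \<real>"
proof -
  have "lanczos_vec d x k j \<in> \<real>" for j using lanczos_state_real[OF x] by blast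
  then have "lanczos_norm d x k = of_real (\<Sum>j=1..d. (Re (lanczos_vec d x k j))\<^sup>2)"
    unfolding lanczos_norm_def dot_def by (simp add: of_real_Re power2_eq_square)
  moreover have "(\<Sum>j=1..d. (Re (lanczos_vec d x k j))\<^sup>2) \<ge> 0" by (simp add: sum_nonneg)
  ultimately show ?thesis by (simp add: csqrt_of_real)
qed

lemma dot_mat_vec:
  assumes A: "A \<in> Orth d K"
  shows "dot d (mat_vec d A u) (mat_vec d A w) = dot d u w"
proof -
  have "dot d (mat_vec d A u) (mat_vec d A w) = (\<Sum>a=1..d. \<Sum>b=1..d. A a b * u b * mat_vec d A w a)"
    unfolding dot_def mat_vec_def[of d A u] by (simp add: sum_distrib_right)
  also have "\<dots> = (\<Sum>b=1..d. u b * (\<Sum>a=1..d. A a b * mat_vec d A w a))"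
    by (subst sum.swap) (simp add: sum_distrib_left mult_ac)
  also have "\<dots> = dot d u w"
    unfolding dot_def using Orth_transpose_mat_vec[OF A] by simp
  finally show ?thesis .
qed

lemma skew_mult_act:
  assumes A: "A \<in> Orth d K" and x: "x \<in> Vsp d"
  shows "skew_mult d (act d A x) (mat_vec d A u) a = mat_vec d A (skew_mult d x u) a"
proof -
  have "skew_mult d (act d A x) (mat_vec d A u) a
      = dot d (mat_vec d A (\<lambda>q. \<Sum>p=1..d. A a p * snd x p q)) (mat_vec d A u)"
    unfolding skew_mult_def dot_def skew_entry_eq[OF act_Vsp[OF A x]] snd_act_eq_mat_vec ..
  also have "\<dots> = dot d (\<lambda>q. \<Sum>p=1..d. A a p * snd x p q) u" by (rule dot_mat_vec[OF A])
  also have "\<dots> = (\<Sum>q=1..d. \<Sum>p=1..d. A a p * snd x p q * u q)"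
    unfolding dot_def by (simp add: sum_distrib_right)
  also have "\<dots> = (\<Sum>p=1..d. \<Sum>q=1..d. A a p * snd x p q * u q)" by (rule sum.swap)
  also have "\<dots> = mat_vec d A (skew_mult d x u) a"
    unfolding mat_vec_def skew_mult_def skew_entry_eq[OF x] by (simp add: sum_distrib_left mult.assoc)
  finally show ?thesis .
qed

lemma mat_vec_linear:
  "mat_vec d A (\<lambda>i. a * f i + b * g i) = (\<lambda>i. a * mat_vec d A f i + b * mat_vec d A g i)"
  unfolding mat_vec_def by (simp add: sum.distrib sum_distrib_left algebra_simps)

lemma lanczos_state_act:
  assumes A: "A \<in> Orth d K" and x: "x \<in> Vsp d"
  shows "(\<forall>a\<in>{1..d}. lanczos_vec d (act d A x) k a = mat_vec d A (lanczos_vec d x k) a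
      \<and> lanczos_vec d (act d A x) (Suc k) a = mat_vec d A (lanczos_vec d x (Suc k)) a)
    \<and> lanczos_coeff d (act d A x) k = lanczos_coeff d x k"
proof (induction k)
  case 0
  show ?case by (simp add: lanczos_vec_0 lanczos_vec_1 fst_act mat_vec_def)
next
  case (Suc k)
  then have r: "\<And>a. a \<in> {1..d} \<Longrightarrow> lanczos_vec d (act d A x) k a = mat_vec d A (lanczos_vec d x k) a"
    and r': "\<And>a. a \<in> {1..d} \<Longrightarrow>
      lanczos_vec d (act d A x) (Suc k) a = mat_vec d A (lanczos_vec d x (Suc k)) a"
    and p: "lanczos_coeff d (act d A x) k = lanczos_coeff d x k" by blast+
  have n: "lanczos_norm d (act d A x) (Suc k) = lanczos_norm d x (Suc k)"
    unfolding lanczos_norm_def using dot_cong[OF r' r'] dot_mat_vec[OF A] by simp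
  have M: "skew_mult d (act d A x) (lanczos_vec d (act d A x) (Suc k))
      = skew_mult d (act d A x) (mat_vec d A (lanczos_vec d x (Suc k)))"
    by (rule skew_mult_cong) (rule r')
  have "lanczos_vec d (act d A x) (Suc (Suc k)) a = mat_vec d A (lanczos_vec d x (Suc (Suc k))) a"
    if a: "a \<in> {1..d}" for a
    unfolding lanczos_vec_Suc_Suc mat_vec_linear p n M skew_mult_act[OF A x] using r[OF a] by simp
  then show ?case using r' p n by (simp add: lanczos_coeff_Suc)
qed

lemma lanczos_vec_act:
  "A \<in> Orth d K \<Longrightarrow> x \<in> Vsp d \<Longrightarrow> a \<in> {1..d}
    \<Longrightarrow> lanczos_vec d (act d A x) k a = mat_vec d A (lanczos_vec d x k) a"
  using lanczos_state_act by blast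

lemma lanczos_norm_act:
  assumes A: "A \<in> Orth d K" and x: "x \<in> Vsp d"
  shows "lanczos_norm d (act d A x) k = lanczos_norm d x k"
proof -
  have "lanczos_norm d (act d A x) k
      = dot d (mat_vec d A (lanczos_vec d x k)) (mat_vec d A (lanczos_vec d x k))"
    unfolding lanczos_norm_def by (rule dot_cong) (simp_all add: lanczos_vec_act[OF A x])
  then show ?thesis by (simp add: dot_mat_vec[OF A] lanczos_norm_def)
qed

lemma lanczos_coeff_act:
  "A \<in> Orth d K \<Longrightarrow> x \<in> Vsp d \<Longrightarrow> lanczos_coeff d (act d A x) k = lanczos_coeff d x k"
  using lanczos_state_act by blast

section \<open>The slices \<open>L\<^sup>(\<^sup>m\<^sup>)\<close>\<close>

text \<open>Closed form of \<open>L\<^sup>(\<^sup>m\<^sup>)\<close> for \<open>1 \<le> m \<le> d - 1\<close>: \<open>v\<close> is a multiple of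
  \<open>e\<^sub>d\<close>, and in the last \<open>m - 1\<close> columns of \<open>M\<close> only the superdiagonal entry
  can be nonzero above the diagonal.\<close>
definition Lslice :: "nat \<Rightarrow> nat \<Rightarrow> pt set" where
  "Lslice d m = {x \<in> Vsp d. (\<forall>a\<in>{1..d-1}. fst x a = 0)
      \<and> (\<forall>a b. 1 \<le> a \<longrightarrow> a + 2 \<le> b \<longrightarrow> b \<le> d \<longrightarrow> d + 2 \<le> b + m \<longrightarrow> snd x a b = 0)}"

lemma Lset_Suc_eq_Lslice: "Suc n \<le> d - 1 \<Longrightarrow> Lset d (Suc n) = Lslice d (Suc n)"
proof (induction n)
  case 0
  show ?case unfolding Lslice_def by auto
next
  case (Suc n)
  have e: "d - (n + 2) + 2 = d - n" using Suc.prems by simp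
  have "x \<in> Lslice d (Suc (Suc n)) \<longleftrightarrow>
      x \<in> Lslice d (Suc n) \<and> (\<forall>k\<in>{1..d - (n + 2)}. snd x k (d - n) = 0)" for x
  proof
    assume x: "x \<in> Lslice d (Suc (Suc n))"
    then show "x \<in> Lslice d (Suc n) \<and> (\<forall>k\<in>{1..d - (n + 2)}. snd x k (d - n) = 0)"
      using Suc.prems unfolding Lslice_def by auto
  next
    assume x: "x \<in> Lslice d (Suc n) \<and> (\<forall>k\<in>{1..d - (n + 2)}. snd x k (d - n) = 0)"
    show "x \<in> Lslice d (Suc (Suc n))"
      unfolding Lslice_def mem_Collect_eq
    proof (intro conjI allI impI)
      fix a b assume ab: "1 \<le> a" "a + 2 \<le> b" "b \<le> d" "d + 2 \<le> b + Suc (Suc n)"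
      show "snd x a b = 0"
      proof (cases "d + 2 \<le> b + Suc n")
        case False
        then have "b = d - n" using ab by simp
        then show ?thesis using x ab by auto
      qed (use x ab in \<open>auto simp: Lslice_def\<close>)
    qed (use x in \<open>auto simp: Lslice_def\<close>)
  qed
  then show ?case using Suc e by auto
qed

lemma Lset_eq_Lslice: "1 \<le> m \<Longrightarrow> m \<le> d - 1 \<Longrightarrow> Lset d m = Lslice d m"
  using Lset_Suc_eq_Lslice[of "m - 1" d] by simp

lemma Lslice_antimono: "m' \<le> m \<Longrightarrow> Lslice d m \<subseteq> Lslice d m'"
  unfolding Lslice_def by force

lemma affine_closed_Lslice: "affine_closed (Lslice d m)"
  unfolding affine_closed_def
proof (intro ballI allI)
  fix x y t assume x: "x \<in> Lslice d m" and y: "y \<in> Lslice d m"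
  then have "affine_line x y t \<in> Vsp d"
    using affine_closed_Vsp unfolding affine_closed_def Lslice_def by blast
  then show "affine_line x y t \<in> Lslice d m"
    using x y unfolding Lslice_def by (simp add: affine_line_def)
qed

lemma sum_eq_single:
  assumes "q \<in> {1..d}" "\<And>b. b \<in> {1..d} \<Longrightarrow> b \<noteq> q \<Longrightarrow> f b = 0"
  shows "(\<Sum>b=1..(d::nat). f b) = (f q :: complex)"
proof -
  have "(\<Sum>b=1..d. f b) = (\<Sum>b\<in>{q}. f b)"
    by (rule sum.mono_neutral_right) (use assms in auto)
  then show ?thesis by simp
qed

definition supported_at :: "nat \<Rightarrow> (nat \<Rightarrow> complex) \<Rightarrow> nat \<Rightarrow> bool" where
  "supported_at d u a \<longleftrightarrow> (\<forall>b\<in>{1..d}. b \<noteq> a \<longrightarrow> u b = 0)"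

text \<open>The entry at \<open>d - k + 1\<close> vanishes by orthogonality to \<open>r\<^sub>k\<close>, or, if
  \<open>r\<^sub>k = 0\<close>, because then the coefficient \<open>p\<^sub>k\<close> vanishes.\<close>
lemma lanczos_vec_Suc_Suc_on_Lslice:
  assumes x: "x \<in> Lslice d m" and k: "k + 1 \<le> m" "m < d"
    and supp: "supported_at d (lanczos_vec d x k) (d - k + 1)"
      "supported_at d (lanczos_vec d x (k + 1)) (d - k)"
    and a: "a \<in> {1..d}"
  shows "lanczos_vec d x (k + 2) a = (if a < d - k
    then lanczos_coeff d x k * snd x a (d - k) * lanczos_vec d x (k + 1) (d - k) else 0)"
proof -
  define q where "q = d - k"
  have q: "q \<in> {1..d}" using k unfolding q_def by auto
  have r2: "lanczos_vec d x (k + 2) a = lanczos_coeff d x k * skew_mult d x (lanczos_vec d x (k + 1)) a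
      + lanczos_norm d x (k + 1) * lanczos_vec d x k a"
    using lanczos_vec_Suc_Suc[of d x k] by simp
  have Mq: "skew_mult d x (lanczos_vec d x (k + 1)) a = skew_entry x a q * lanczos_vec d x (k + 1) q"
    unfolding skew_mult_def by (rule sum_eq_single[OF q]) (use supp q_def in \<open>auto simp: supported_at_def\<close>)
  have rk: "lanczos_vec d x k a = 0" if "a \<noteq> q + 1"
    using supp a that unfolding supported_at_def q_def by auto
  consider "a \<le> q" | "a = q + 1" | "a > q + 1" by linarith
  then show ?thesis
  proof cases
    case 1
    then show ?thesis using r2 Mq rk unfolding skew_entry_def q_def by auto
  next
    case 2
    have k1: "1 \<le> k" using 2 a q_def by auto
    define \<sigma> where "\<sigma> = lanczos_vec d x k a"
    have "dot d (lanczos_vec d x k) (lanczos_vec d x (k + 2)) = \<sigma> * lanczos_vec d x (k + 2) a"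
      unfolding dot_def \<sigma>_def
      by (rule sum_eq_single[OF a]) (use 2 supp q_def in \<open>auto simp: supported_at_def\<close>)
    then have h: "\<sigma> * lanczos_vec d x (k + 2) a = 0" using lanczos_vec_orthogonal_less[of k "k + 2"] by simp
    show ?thesis
    proof (cases "\<sigma> = 0")
      case True
      have "lanczos_norm d x k = \<sigma> * \<sigma>" unfolding lanczos_norm_def dot_def \<sigma>_def
        by (rule sum_eq_single[OF a]) (use 2 supp q_def in \<open>auto simp: supported_at_def\<close>)
      then have "lanczos_coeff d x k = 0" using True k1 lanczos_coeff_eq_0_iff by auto
      then show ?thesis using r2 True 2 \<sigma>_def q_def by simp
    qed (use h 2 q_def in simp)
  next
    case 3
    have "snd x q a = 0" using x 3 a k unfolding Lslice_def q_def by auto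
    then have "skew_entry x a q = 0" using 3 unfolding skew_entry_def by simp
    then show ?thesis using r2 Mq rk 3 q_def by simp
  qed
qed

lemma lanczos_vec_supported_on_Lslice:
  assumes x: "x \<in> Lslice d m" and m: "m < d"
  shows "j \<le> m \<Longrightarrow> supported_at d (lanczos_vec d x j) (d + 1 - j)"
proof (induction j rule: induct_nat_012)
  case 0
  show ?case by (simp add: lanczos_vec_0 supported_at_def)
next
  case 1
  show ?case using x by (auto simp: lanczos_vec_1 supported_at_def Lslice_def)
next
  case (ge2 k)
  have supp: "supported_at d (lanczos_vec d x k) (d - k + 1)"
    "supported_at d (lanczos_vec d x (k + 1)) (d - k)"
    using ge2 m by (auto simp: Suc_diff_le)
  show ?case unfolding supported_at_def
  proof (intro ballI impI)
    fix a assume a: "a \<in> {1..d}" and a': "a \<noteq> d + 1 - Suc (Suc k)"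
    have "a < d - k \<Longrightarrow> snd x a (d - k) = 0" using x a a' ge2.prems m unfolding Lslice_def by auto
    then show "lanczos_vec d x (Suc (Suc k)) a = 0"
      using lanczos_vec_Suc_Suc_on_Lslice[OF x _ m supp a] ge2.prems by auto
  qed
qed

lemma lanczos_norm_on_Lslice:
  assumes x: "x \<in> Lslice d (k + 1)" and k: "k + 2 \<le> d"
  shows "lanczos_norm d x (k + 2) = hfun d (k + 2) x * lanczos_norm d x (k + 1) * (lanczos_coeff d x k)\<^sup>2"
proof -
  define q where "q = d - k"
  define \<rho> where "\<rho> = lanczos_vec d x (k + 1) q"
  have q: "q \<in> {1..d}" using k unfolding q_def by auto
  have supp: "supported_at d (lanczos_vec d x k) (d - k + 1)"
    "supported_at d (lanczos_vec d x (k + 1)) q"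
    using lanczos_vec_supported_on_Lslice[OF x, of k] lanczos_vec_supported_on_Lslice[OF x, of "k + 1"] k
    unfolding q_def by (auto simp: Suc_diff_le)
  have r2: "lanczos_vec d x (k + 2) a = (if a < q then lanczos_coeff d x k * snd x a q * \<rho> else 0)"
    if "a \<in> {1..d}" for a
    using lanczos_vec_Suc_Suc_on_Lslice[OF x _ _ supp[unfolded q_def] that] k unfolding q_def \<rho>_def by simp
  have n1: "lanczos_norm d x (k + 1) = \<rho> * \<rho>" unfolding lanczos_norm_def dot_def \<rho>_def
    by (rule sum_eq_single[OF q]) (use supp in \<open>auto simp: supported_at_def\<close>)
  have "lanczos_norm d x (k + 2) = (\<Sum>a=1..d. if a < q then (lanczos_coeff d x k * snd x a q * \<rho>)\<^sup>2 else 0)"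
    unfolding lanczos_norm_def dot_def
  proof (intro sum.cong refl)
    fix a assume "a \<in> {1..d}"
    then show "lanczos_vec d x (k + 2) a * lanczos_vec d x (k + 2) a
        = (if a < q then (lanczos_coeff d x k * snd x a q * \<rho>)\<^sup>2 else 0)"
      using r2 by (simp add: power2_eq_square)
  qed
  also have "\<dots> = (\<Sum>a=1..q-1. (lanczos_coeff d x k)\<^sup>2 * \<rho>\<^sup>2 * (snd x a q)\<^sup>2)"
    by (rule sum.mono_neutral_cong_right) (use q in \<open>auto simp: power_mult_distrib\<close>)
  also have "\<dots> = (lanczos_coeff d x k)\<^sup>2 * \<rho>\<^sup>2 * hfun d (k + 2) x"
    using k by (simp add: hfun_def sum_distrib_left q_def Suc_diff_Suc numeral_2_eq_2)
  finally show ?thesis using n1 by (simp add: power2_eq_square mult_ac)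
qed

definition base_pt :: "nat \<Rightarrow> pt" where
  "base_pt d = (\<lambda>a. if a = d then 1 else 0,
     \<lambda>a b. if 1 \<le> a \<and> b = a + 1 \<and> b \<le> d then 1 else if 1 \<le> b \<and> a = b + 1 \<and> a \<le> d then -1 else 0)"

lemma base_pt_VR: "1 \<le> d \<Longrightarrow> base_pt d \<in> VR d"
  unfolding mem_VR_iff mem_Vsp_iff base_pt_def by auto

lemma base_pt_Lslice: "1 \<le> d \<Longrightarrow> base_pt d \<in> Lslice d m"
  using base_pt_VR unfolding Lslice_def mem_VR_iff by (auto simp: base_pt_def)

lemma hfun_base_pt:
  assumes "k + 2 \<le> d"
  shows "hfun d (k + 2) (base_pt d) = 1"
proof -
  define p where "p = d - k - 1"
  have p: "1 \<le> p" "p + 1 \<le> d" "d - (k + 2) + 1 = p" "d - (k + 2) + 2 = p + 1"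
    using assms unfolding p_def by auto
  have "hfun d (k + 2) (base_pt d) = (\<Sum>a=1..p. (snd (base_pt d) a (p + 1))\<^sup>2)"
    unfolding hfun_def p(3,4) by simp
  also have "\<dots> = (snd (base_pt d) p (p + 1))\<^sup>2"
    by (rule sum_eq_single) (use p in \<open>auto simp: base_pt_def\<close>)
  also have "\<dots> = 1" using p by (simp add: base_pt_def)
  finally show ?thesis .
qed

lemma lanczos_norm_base_pt:
  assumes d: "2 \<le> d"
  shows "k \<in> {1..d} \<Longrightarrow> lanczos_norm d (base_pt d) k \<noteq> 0"
proof (induction k rule: less_induct)
  case (less k)
  show ?case
  proof (cases "k = 1")
    case True
    have "lanczos_norm d (base_pt d) 1 = (\<Sum>j=1..d. fst (base_pt d) j * fst (base_pt d) j)"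
      by (simp add: lanczos_norm_def dot_def lanczos_vec_1)
    also have "\<dots> = 1" by (subst sum_eq_single[of d]) (use d in \<open>auto simp: base_pt_def\<close>)
    finally show ?thesis using True by simp
  next
    case False
    define j where "j = k - 2"
    have kj: "k = j + 2" using less.prems False unfolding j_def by auto
    have "lanczos_norm d (base_pt d) (j + 2) = lanczos_norm d (base_pt d) (j + 1) * (lanczos_coeff d (base_pt d) j)\<^sup>2"
      using lanczos_norm_on_Lslice[OF base_pt_Lslice] hfun_base_pt less.prems d kj by simp
    moreover have "lanczos_coeff d (base_pt d) j \<noteq> 0"
      using less.IH less.prems kj by (auto simp: lanczos_coeff_eq_0_iff)
    ultimately show ?thesis using less.IH[of "j + 1"] less.prems kj by simp
  qed
qed

definition lanczos_frame :: "nat \<Rightarrow> pt \<Rightarrow> nat \<Rightarrow> nat \<Rightarrow> complex" where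
  "lanczos_frame d x = (\<lambda>a b. if a \<in> {1..d} \<and> b \<in> {1..d}
     then lanczos_vec d x (d + 1 - a) b / csqrt (lanczos_norm d x (d + 1 - a)) else 0)"

lemma lanczos_frame_Orth:
  assumes nz: "\<forall>k\<in>{1..d}. lanczos_norm d x k \<noteq> 0"
  shows "lanczos_frame d x \<in> Orth d UNIV"
  unfolding Orth_def
proof (intro CollectI conjI allI impI ballI)
  fix a a' assume a: "a \<in> {1..d}" and a': "a' \<in> {1..d}"
  have "(\<Sum>j=1..d. lanczos_frame d x a j * lanczos_frame d x a' j)
      = dot d (lanczos_vec d x (d + 1 - a)) (lanczos_vec d x (d + 1 - a'))
        / (csqrt (lanczos_norm d x (d + 1 - a)) * csqrt (lanczos_norm d x (d + 1 - a')))"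
    unfolding dot_def lanczos_frame_def using a a' by (simp add: sum_divide_distrib)
  also have "\<dots> = (if a = a' then 1 else 0)"
  proof (cases "a = a'")
    case True
    have "d + 1 - a \<in> {1..d}" using a by auto
    then have "lanczos_norm d x (d + 1 - a) \<noteq> 0" using nz by blast
    then show ?thesis using True by (simp add: lanczos_norm_def[symmetric] power2_eq_square[symmetric])
  next
    case False
    then have "d + 1 - a \<noteq> d + 1 - a'" using a a' by auto
    then show ?thesis using False lanczos_vec_orthogonal[of "d + 1 - a" "d + 1 - a'" d x] by simp
  qed
  finally show "(\<Sum>j=1..d. lanczos_frame d x a j * lanczos_frame d x a' j) = (if a = a' then 1 else 0)" .
qed (auto simp: lanczos_frame_def)

lemma lanczos_frame_real:
  assumes x: "x \<in> VR d" and nz: "\<forall>k\<in>{1..d}. lanczos_norm d x k \<noteq> 0"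
  shows "lanczos_frame d x \<in> Orth d \<real>"
proof -
  have "lanczos_frame d x a b \<in> \<real>" for a b
    using lanczos_state_real[OF x] csqrt_lanczos_norm_real[OF x]
    unfolding lanczos_frame_def by (auto intro!: Reals_divide)
  then show ?thesis using lanczos_frame_Orth[OF nz] unfolding Orth_def by blast
qed

text \<open>\<open>M\<close> is tridiagonal in the basis of Lanczos vectors.\<close>
lemma dot_lanczos_vec_skew_mult_eq_0:
  assumes "lanczos_coeff d x j \<noteq> 0" "j + 3 \<le> l"
  shows "dot d (lanczos_vec d x l) (skew_mult d x (lanczos_vec d x (Suc j))) = 0"
proof -
  have "lanczos_coeff d x j * dot d (skew_mult d x (lanczos_vec d x (Suc j))) (lanczos_vec d x l) = 0"
    using assms(2) by (simp add: lanczos_coeff_dot_skew_mult lanczos_vec_orthogonal)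
  then show ?thesis using assms(1) dot_commute by auto
qed

lemma fst_act_lanczos_frame:
  assumes a: "a \<in> {1..d}"
  shows "fst (act d (lanczos_frame d x) x) a
      = dot d (lanczos_vec d x (d + 1 - a)) (lanczos_vec d x 1) / csqrt (lanczos_norm d x (d + 1 - a))"
  using a unfolding fst_act mat_vec_def lanczos_frame_def dot_def
  by (simp add: lanczos_vec_1 sum_divide_distrib mult_ac)

lemma snd_act_lanczos_frame:
  assumes x: "x \<in> Vsp d" and a: "a \<in> {1..d}" and b: "b \<in> {1..d}"
  shows "snd (act d (lanczos_frame d x) x) a b
      = dot d (lanczos_vec d x (d + 1 - a)) (skew_mult d x (lanczos_vec d x (d + 1 - b)))
        / (csqrt (lanczos_norm d x (d + 1 - a)) * csqrt (lanczos_norm d x (d + 1 - b)))"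
  using a b unfolding snd_act lanczos_frame_def dot_def skew_mult_def skew_entry_eq[OF x]
  by (simp add: sum_divide_distrib sum_distrib_left sum_distrib_right mult_ac)

lemma act_lanczos_frame_Lslice:
  assumes d: "2 \<le> d" and x: "x \<in> Vsp d" and nz: "\<forall>k\<in>{1..d}. lanczos_norm d x k \<noteq> 0"
  shows "act d (lanczos_frame d x) x \<in> Lslice d (d - 1)"
  unfolding Lslice_def mem_Collect_eq
proof (intro conjI ballI allI impI)
  show "act d (lanczos_frame d x) x \<in> Vsp d" by (rule act_Vsp[OF lanczos_frame_Orth[OF nz] x])
next
  fix a assume "a \<in> {1..d - 1}"
  then show "fst (act d (lanczos_frame d x) x) a = 0"
    using fst_act_lanczos_frame[of a d x] lanczos_vec_orthogonal[of "d + 1 - a" 1 d x] by auto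
next
  fix a b assume ab: "1 \<le> a" "a + 2 \<le> b" "b \<le> d" "d + 2 \<le> b + (d - 1)"
  define j where "j = d - b"
  have "lanczos_coeff d x j \<noteq> 0" using nz ab unfolding j_def lanczos_coeff_eq_0_iff by auto
  then have "dot d (lanczos_vec d x (d + 1 - a)) (skew_mult d x (lanczos_vec d x (Suc j))) = 0"
    using ab by (intro dot_lanczos_vec_skew_mult_eq_0) (auto simp: j_def)
  moreover have "Suc j = d + 1 - b" using ab unfolding j_def by simp
  ultimately show "snd (act d (lanczos_frame d x) x) a b = 0"
    using snd_act_lanczos_frame[OF x, of a b] ab by simp
qed

section \<open>The invariants \<open>f\<^sub>i\<close>\<close>

lemma poly_fun_comp_act:
  "poly_fun d UNIV p \<Longrightarrow> \<exists>p'. poly_fun d UNIV p' \<and> (\<forall>y\<in>Vsp d. p' y = p (act d A y))"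
proof (induction rule: poly_fun.induct)
  case (const c)
  show ?case by (intro exI[of _ "\<lambda>_. c"]) (auto intro: poly_fun.intros)
next
  case (coord_v i)
  have "poly_fun d UNIV (\<lambda>y. \<Sum>j=1..d. A i j * fst y j)"
    by (auto intro!: poly_fun_sum poly_fun.mult poly_fun.const poly_fun.coord_v)
  then show ?case by (intro exI[of _ "\<lambda>y. \<Sum>j=1..d. A i j * fst y j"]) (simp add: fst_act mat_vec_def)
next
  case (coord_M i j)
  have "poly_fun d UNIV (\<lambda>y. \<Sum>a=1..d. \<Sum>b=1..d. A i a * skew_entry y a b * A j b)"
    by (auto intro!: poly_fun_sum poly_fun.mult poly_fun.const poly_fun_skew_entry)
  then show ?case
    by (intro exI[of _ "\<lambda>y. \<Sum>a=1..d. \<Sum>b=1..d. A i a * skew_entry y a b * A j b"])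
      (simp add: snd_act skew_entry_eq)
next
  case (add p q)
  then obtain p' q' where "poly_fun d UNIV p'" "\<forall>y\<in>Vsp d. p' y = p (act d A y)"
      "poly_fun d UNIV q'" "\<forall>y\<in>Vsp d. q' y = q (act d A y)" by blast
  then show ?case by (intro exI[of _ "\<lambda>y. p' y + q' y"]) (auto intro: poly_fun.add)
next
  case (mult p q)
  then obtain p' q' where "poly_fun d UNIV p'" "\<forall>y\<in>Vsp d. p' y = p (act d A y)"
      "poly_fun d UNIV q'" "\<forall>y\<in>Vsp d. q' y = q (act d A y)" by blast
  then show ?case by (intro exI[of _ "\<lambda>y. p' y * q' y"]) (auto intro: poly_fun.mult)
qed

text \<open>A representative of \<open>P/Q\<close> defined at \<open>z\<close> is pulled back along the inverse
  matrix to one defined at \<open>C\<cdot>z\<close>.\<close>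
lemma ratfun_of_act_eq:
  assumes P: "poly_fun d UNIV P" and Q: "poly_fun d UNIV Q" and y0: "y0 \<in> Vsp d" "Q y0 \<noteq> 0"
    and inv: "\<And>A y. A \<in> Orth d UNIV \<Longrightarrow> y \<in> Vsp d \<Longrightarrow> P (act d A y) = P y \<and> Q (act d A y) = Q y"
    and C: "C \<in> Orth d UNIV" and z: "z \<in> Vsp d" and dom: "ratfun_of d P Q z \<noteq> None"
  shows "ratfun_of d P Q (act d C z) = ratfun_of d P Q z"
proof -
  obtain P1 Q1 where rep: "poly_fun d UNIV P1" "poly_fun d UNIV Q1"
      "\<forall>y\<in>Vsp d. P y * Q1 y = P1 y * Q y" "Q1 z \<noteq> 0"
    using dom by (rule ratfun_of_not_None_D)
  define D where "D = (\<lambda>i j. C j i)"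
  have D: "D \<in> Orth d UNIV" unfolding D_def by (rule Orth_transpose[OF C])
  obtain P2 where P2: "poly_fun d UNIV P2" "\<forall>y\<in>Vsp d. P2 y = P1 (act d D y)"
    using poly_fun_comp_act[OF rep(1)] by blast
  obtain Q2 where Q2: "poly_fun d UNIV Q2" "\<forall>y\<in>Vsp d. Q2 y = Q1 (act d D y)"
    using poly_fun_comp_act[OF rep(2)] by blast
  have Cz: "act d C z \<in> Vsp d" by (rule act_Vsp[OF C z])
  have z_back: "act d D (act d C z) = z" unfolding D_def by (rule act_transpose_act[OF C z])
  have "\<forall>y\<in>Vsp d. P y * Q2 y = P2 y * Q y"
  proof
    fix y assume y: "y \<in> Vsp d"
    then have "act d D y \<in> Vsp d" by (rule act_Vsp[OF D])
    then show "P y * Q2 y = P2 y * Q y" using rep(3) P2 Q2 inv[OF D y] y by auto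
  qed
  then have "ratfun_of d P Q (act d C z) = Some (P2 (act d C z) / Q2 (act d C z))"
    by (rule ratfun_of_eq_Some[OF Q y0 P2(1) Q2(1) _ Cz]) (use Q2 Cz z_back rep in simp)
  also have "\<dots> = ratfun_of d P Q z"
    using ratfun_of_eq_Some[OF Q y0 rep(1-3) z rep(4)] P2 Q2 Cz z_back by simp
  finally show ?thesis .
qed

lemma invariant_ratfun_of:
  assumes P: "poly_fun d UNIV P" and Q: "poly_fun d UNIV Q" and y0: "y0 \<in> Vsp d" "Q y0 \<noteq> 0"
    and inv: "\<And>A y. A \<in> Orth d UNIV \<Longrightarrow> y \<in> Vsp d \<Longrightarrow> P (act d A y) = P y \<and> Q (act d A y) = Q y"
  shows "invariant d UNIV (ratfun_of d P Q)"
  unfolding invariant_def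
proof (intro ballI)
  fix A x assume A: "A \<in> Orth d UNIV" and x: "x \<in> Vsp d"
  have act_eq: "ratfun_of d P Q (act d C z) = ratfun_of d P Q z"
    if "C \<in> Orth d UNIV" "z \<in> Vsp d" "ratfun_of d P Q z \<noteq> None" for C z
    using ratfun_of_act_eq[OF P Q y0 _ that] inv by blast
  show "ratfun_of d P Q (act d A x) = ratfun_of d P Q x"
  proof (cases "ratfun_of d P Q x = None")
    case True
    show ?thesis
    proof (rule ccontr)
      assume ne: "ratfun_of d P Q (act d A x) \<noteq> ratfun_of d P Q x"
      then have "ratfun_of d P Q (act d (\<lambda>i j. A j i) (act d A x)) = ratfun_of d P Q (act d A x)"
        using True by (intro act_eq[OF Orth_transpose[OF A] act_Vsp[OF A x]]) auto
      then show False using ne act_transpose_act[OF A x] by simp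
    qed
  qed (use act_eq[OF A x] in blast)
qed

lemma invariant_mono: "invariant d UNIV g \<Longrightarrow> invariant d \<real> g"
  unfolding invariant_def using Orth_mono by blast

definition finv_denom :: "nat \<Rightarrow> nat \<Rightarrow> pt \<Rightarrow> complex" where
  "finv_denom d i x = lanczos_norm d x (i - 1) * (lanczos_coeff d x (i - 2))\<^sup>2"

definition finv_lanczos :: "nat \<Rightarrow> nat \<Rightarrow> pt \<Rightarrow> complex option" where
  "finv_lanczos d i = ratfun_of d (\<lambda>x. lanczos_norm d x i) (finv_denom d i)"

lemma poly_fun_finv_denom: "poly_fun d \<real> (finv_denom d i)"
  unfolding finv_denom_def
  by (auto intro!: poly_fun.mult poly_fun_power poly_fun_lanczos_norm poly_fun_lanczos_coeff)

lemma finv_denom_neq_0: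
  assumes "2 \<le> i" "\<forall>k\<in>{1..i - 1}. lanczos_norm d x k \<noteq> 0"
  shows "finv_denom d i x \<noteq> 0"
  using assms by (auto simp: finv_denom_def lanczos_coeff_eq_0_iff)

lemma finv_denom_act: "A \<in> Orth d K \<Longrightarrow> x \<in> Vsp d \<Longrightarrow> finv_denom d i (act d A x) = finv_denom d i x"
  unfolding finv_denom_def by (simp add: lanczos_norm_act lanczos_coeff_act)

lemma poly_fun_hfun:
  assumes "1 \<le> i" "i \<le> d"
  shows "poly_fun d \<real> (hfun d i)"
proof (cases "i = 1")
  case True
  then show ?thesis unfolding hfun_def
    by (auto intro!: poly_fun_sum poly_fun_power poly_fun.coord_v)
next
  case False
  have "poly_fun d \<real> (\<lambda>x. (snd x k (d - i + 2))\<^sup>2)" if "k \<in> {1..d - i + 1}" for k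
    using that assms False by (auto intro!: poly_fun_power poly_fun.coord_M)
  then have "poly_fun d \<real> (\<lambda>x. \<Sum>k=1..d - i + 1. (snd x k (d - i + 2))\<^sup>2)"
    by (intro poly_fun_sum) auto
  then show ?thesis using False unfolding hfun_def by simp
qed

lemma hfun_1: "hfun d 1 = (\<lambda>x. lanczos_norm d x 1)"
  unfolding hfun_def lanczos_norm_def dot_def by (simp add: lanczos_vec_1 power2_eq_square)

lemma lanczos_norm_eq_hfun_mult:
  assumes "2 \<le> i" "i \<le> d" "y \<in> Lslice d (i - 1)"
  shows "lanczos_norm d y i = hfun d i y * finv_denom d i y"
  using lanczos_norm_on_Lslice[of y d "i - 2"] assms unfolding finv_denom_def
  by (simp add: numeral_2_eq_2 Suc_diff_Suc mult_ac)

lemma base_pt_Vsp: "1 \<le> d \<Longrightarrow> base_pt d \<in> Vsp d"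
  using base_pt_VR unfolding mem_VR_iff by blast

lemma finv_denom_base_pt: "2 \<le> d \<Longrightarrow> 2 \<le> i \<Longrightarrow> i \<le> d \<Longrightarrow> finv_denom d i (base_pt d) \<noteq> 0"
  by (intro finv_denom_neq_0 ballI lanczos_norm_base_pt) auto

lemma invariant_finv_lanczos:
  assumes d: "2 \<le> d" and i: "2 \<le> i" "i \<le> d"
  shows "invariant d UNIV (finv_lanczos d i)"
proof -
  have n: "poly_fun d UNIV (\<lambda>x. lanczos_norm d x i)" by (rule poly_fun_mono[OF poly_fun_lanczos_norm]) simp
  have q: "poly_fun d UNIV (finv_denom d i)" by (rule poly_fun_mono[OF poly_fun_finv_denom]) simp
  have b: "base_pt d \<in> Vsp d" using d by (intro base_pt_Vsp) simp
  show ?thesis unfolding finv_lanczos_def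
    by (rule invariant_ratfun_of[OF n q b finv_denom_base_pt[OF d i]])
      (simp add: lanczos_norm_act finv_denom_act)
qed

lemma finv_lanczos_on_Lslice:
  assumes d: "2 \<le> d" and i: "2 \<le> i" "i \<le> d"
    and x: "x \<in> Lslice d (i - 1)" and dom: "finv_lanczos d i x \<noteq> None"
  shows "finv_lanczos d i x = Some (hfun d i x)"
proof -
  have n: "poly_fun d UNIV (\<lambda>x. lanczos_norm d x i)" by (rule poly_fun_mono[OF poly_fun_lanczos_norm]) simp
  have q: "poly_fun d UNIV (finv_denom d i)" by (rule poly_fun_mono[OF poly_fun_finv_denom]) simp
  have h: "poly_fun d UNIV (hfun d i)" by (rule poly_fun_mono[OF poly_fun_hfun]) (use i in auto)
  have b: "base_pt d \<in> Vsp d" "base_pt d \<in> Lslice d (i - 1)"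
    using d by (auto intro: base_pt_Vsp base_pt_Lslice)
  obtain P1 Q1 where xV: "x \<in> Vsp d" and rep: "poly_fun d UNIV P1" "poly_fun d UNIV Q1"
      "\<forall>y\<in>Vsp d. lanczos_norm d y i * Q1 y = P1 y * finv_denom d i y" "Q1 x \<noteq> 0"
    using dom unfolding finv_lanczos_def by (rule ratfun_of_not_None_D)
  have "hfun d i x * Q1 x - P1 x = 0"
  proof (rule poly_fun_mult_eq_0_imp_eq_0[OF affine_closed_Lslice _ q _ b(2) finv_denom_base_pt[OF d i] x])
    show "poly_fun d UNIV (\<lambda>y. hfun d i y * Q1 y - P1 y)"
      using h rep by (auto intro!: poly_fun_diff poly_fun.mult)
    fix y assume y: "y \<in> Lslice d (i - 1)"
    then have "lanczos_norm d y i * Q1 y = P1 y * finv_denom d i y"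
      using rep(3) unfolding Lslice_def by blast
    moreover have "(hfun d i y * Q1 y - P1 y) * finv_denom d i y
        = lanczos_norm d y i * Q1 y - P1 y * finv_denom d i y"
      unfolding lanczos_norm_eq_hfun_mult[OF i y] by (simp add: algebra_simps)
    ultimately show "(hfun d i y * Q1 y - P1 y) * finv_denom d i y = 0" by simp
  qed
  moreover have "finv_lanczos d i x = Some (P1 x / Q1 x)" unfolding finv_lanczos_def
    by (rule ratfun_of_eq_Some[OF q b(1) finv_denom_base_pt[OF d i] rep(1-3) xV rep(4)])
  ultimately show ?thesis using rep(4) by (simp add: field_simps)
qed

text \<open>Every point where all \<open>n\<^sub>k\<close> are nonzero is moved into \<open>L\<^sup>(\<^sup>d\<^sup>-\<^sup>1\<^sup>)\<close> by the Lanczos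
  frame, so an invariant rational function is determined by its restriction to \<open>L\<^sup>(\<^sup>i\<^sup>-\<^sup>1\<^sup>)\<close>.\<close>
lemma invariant_ratfun_on_U_C:
  assumes d: "2 \<le> d" and i: "2 \<le> i" "i \<le> d"
    and PQ: "poly_fun d UNIV P" "poly_fun d UNIV Q" and inv: "invariant d UNIV (ratfun_of d P Q)"
    and L: "\<forall>x\<in>Lset d (i - 1). ratfun_of d P Q x \<noteq> None \<longrightarrow> ratfun_of d P Q x = Some (hfun d i x)"
    and y: "y \<in> Vsp d" "\<forall>k\<in>{1..d}. lanczos_norm d y k \<noteq> 0" "Q y \<noteq> 0"
  shows "P y * finv_denom d i y = lanczos_norm d y i * Q y"
proof -
  define z where "z = act d (lanczos_frame d y) y"
  have R: "lanczos_frame d y \<in> Orth d UNIV" by (rule lanczos_frame_Orth[OF y(2)])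
  have "z \<in> Lslice d (d - 1)" unfolding z_def by (rule act_lanczos_frame_Lslice[OF d y(1,2)])
  moreover have "i - 1 \<le> d - 1" using i by simp
  ultimately have zL: "z \<in> Lslice d (i - 1)" using Lslice_antimono by blast
  have "ratfun_of d P Q z = ratfun_of d P Q y"
    using inv R y(1) unfolding invariant_def z_def by blast
  also have "\<dots> = Some (P y / Q y)" by (rule ratfun_of_eq_quotient[OF PQ y(1,3)])
  finally have "hfun d i z = P y / Q y" using L zL Lset_eq_Lslice[of "i - 1" d] i by auto
  moreover have "lanczos_norm d z i = hfun d i z * finv_denom d i z"
    by (rule lanczos_norm_eq_hfun_mult[OF i zL])
  ultimately show ?thesis using y(3) unfolding z_def
    by (simp add: lanczos_norm_act[OF R y(1)] finv_denom_act[OF R y(1)] field_simps)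
qed

lemma finv_lanczos_unique:
  assumes d: "2 \<le> d" and i: "2 \<le> i" "i \<le> d"
    and g: "is_ratfun d UNIV g" "invariant d UNIV g"
      "\<forall>x\<in>Lset d (i - 1). g x \<noteq> None \<longrightarrow> g x = Some (hfun d i x)"
  shows "g = finv_lanczos d i"
proof -
  obtain P Q y1 where PQ: "poly_fun d UNIV P" "poly_fun d UNIV Q" "g = ratfun_of d P Q"
    and y1: "y1 \<in> Vsp d" "Q y1 \<noteq> 0"
    using g(1) unfolding is_ratfun_def by blast
  have n: "poly_fun d UNIV (\<lambda>x. lanczos_norm d x i)" by (rule poly_fun_mono[OF poly_fun_lanczos_norm]) simp
  have q: "poly_fun d UNIV (finv_denom d i)" by (rule poly_fun_mono[OF poly_fun_finv_denom]) simp
  define N where "N x = (\<Prod>k=1..d. lanczos_norm d x k)" for x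
  have N: "poly_fun d UNIV N" unfolding N_def by (auto intro!: poly_fun_prod poly_fun_mono[OF poly_fun_lanczos_norm])
  define R where "R x = P x * finv_denom d i x - lanczos_norm d x i * Q x" for x
  have R: "poly_fun d UNIV R" unfolding R_def using PQ n q by (auto intro!: poly_fun_diff poly_fun.mult)
  have b: "base_pt d \<in> Vsp d" "N (base_pt d) \<noteq> 0"
    using d lanczos_norm_base_pt unfolding N_def by (auto intro: base_pt_Vsp)
  have RQN: "R y * Q y * N y = 0" if y: "y \<in> Vsp d" for y
    using invariant_ratfun_on_U_C[OF d i PQ(1,2) _ _ y] g(2,3) PQ(3) unfolding R_def N_def by fastforce
  have "poly_fun d UNIV (\<lambda>y. R y * Q y)" using R PQ(2) by (rule poly_fun.mult)
  then have "R y * Q y = 0" if "y \<in> Vsp d" for y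
    using poly_fun_mult_eq_0_imp_eq_0[OF affine_closed_Vsp _ N RQN b that] by blast
  then have "R y = 0" if "y \<in> Vsp d" for y
    using poly_fun_mult_eq_0_imp_eq_0[OF affine_closed_Vsp R PQ(2) _ y1 that] by blast
  then have "ratfun_of d P Q = finv_lanczos d i" unfolding finv_lanczos_def
    by (intro ratfun_of_cong[OF n q PQ(1,2) b(1) finv_denom_base_pt[OF d i] y1]) (auto simp: R_def)
  then show ?thesis using PQ(3) by simp
qed

lemma finv_eq_finv_lanczos:
  assumes d: "2 \<le> d" and i: "2 \<le> i" "i \<le> d"
  shows "finv d i = finv_lanczos d i"
proof -
  have n: "poly_fun d UNIV (\<lambda>x. lanczos_norm d x i)" by (rule poly_fun_mono[OF poly_fun_lanczos_norm]) simp
  have q: "poly_fun d UNIV (finv_denom d i)" by (rule poly_fun_mono[OF poly_fun_finv_denom]) simp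
  have b: "base_pt d \<in> Vsp d" using d by (intro base_pt_Vsp) simp
  have L: "Lset d (i - 1) = Lslice d (i - 1)" using i by (intro Lset_eq_Lslice) auto
  have "(THE g. is_ratfun d UNIV g \<and> invariant d UNIV g \<and> (\<exists>x\<in>Lset d (i - 1). g x \<noteq> None)
      \<and> (\<forall>x\<in>Lset d (i - 1). g x \<noteq> None \<longrightarrow> g x = Some (hfun d i x))) = finv_lanczos d i"
  proof (rule the_equality, intro conjI)
    show "is_ratfun d UNIV (finv_lanczos d i)"
      unfolding is_ratfun_def finv_lanczos_def using n q b finv_denom_base_pt[OF d i] by blast
    show "invariant d UNIV (finv_lanczos d i)" by (rule invariant_finv_lanczos[OF d i])
    have "finv_lanczos d i (base_pt d) \<noteq> None"
      using ratfun_of_eq_quotient[OF n q b finv_denom_base_pt[OF d i]] by (simp add: finv_lanczos_def)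
    then show "\<exists>x\<in>Lset d (i - 1). finv_lanczos d i x \<noteq> None"
      unfolding L using base_pt_Lslice d by force
    show "\<forall>x\<in>Lset d (i - 1). finv_lanczos d i x \<noteq> None \<longrightarrow> finv_lanczos d i x = Some (hfun d i x)"
      unfolding L using finv_lanczos_on_Lslice[OF d i] by blast
  qed (use finv_lanczos_unique[OF d i] in blast)
  then show ?thesis using i unfolding finv_def by simp
qed

lemma finv_1: "finv d 1 = ratfun_of d (\<lambda>x. lanczos_norm d x 1) (\<lambda>_. 1)"
  unfolding finv_def hfun_1 by simp

lemma finv_eq_Some:
  assumes d: "2 \<le> d" and k: "k \<in> {1..d}" and x: "x \<in> Vsp d"
    and nz: "\<forall>l\<in>{1..k - 1}. lanczos_norm d x l \<noteq> 0"
  shows "finv d k x = Some (if k = 1 then lanczos_norm d x 1 else lanczos_norm d x k / finv_denom d k x)"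
proof (cases "k = 1")
  case True
  have "finv d 1 x = Some (lanczos_norm d x 1)" unfolding finv_1
    using ratfun_of_eq_quotient[OF poly_fun_mono[OF poly_fun_lanczos_norm] poly_fun.const x, of 1] by simp
  then show ?thesis using True by simp
next
  case False
  then have k2: "2 \<le> k" "k \<le> d" using k by auto
  then have "finv_denom d k x \<noteq> 0" using nz by (intro finv_denom_neq_0) auto
  then show ?thesis unfolding finv_eq_finv_lanczos[OF d k2] finv_lanczos_def using False
    by (simp add: ratfun_of_eq_quotient[OF poly_fun_mono[OF poly_fun_lanczos_norm]
          poly_fun_mono[OF poly_fun_finv_denom] x])
qed

lemma U_C_lanczos_norm_neq_0:
  assumes d: "2 \<le> d" and x: "x \<in> U_C d"
  shows "k \<le> d \<Longrightarrow> \<forall>l\<in>{1..k}. lanczos_norm d x l \<noteq> 0"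
proof (induction k)
  case (Suc k)
  then have IH: "\<forall>l\<in>{1..Suc k - 1}. lanczos_norm d x l \<noteq> 0" by simp
  have xV: "x \<in> Vsp d" and "the (finv d (Suc k) x) \<noteq> 0"
    using x Suc.prems unfolding U_C_def by auto
  then have "lanczos_norm d x (Suc k) \<noteq> 0"
    using finv_eq_Some[OF d _ xV IH] Suc.prems by (auto split: if_splits)
  then show ?case using IH by (auto simp: le_Suc_eq)
qed simp

lemma U_C_eq:
  assumes d: "2 \<le> d"
  shows "U_C d = {x \<in> Vsp d. \<forall>k\<in>{1..d}. lanczos_norm d x k \<noteq> 0}"
proof (intro Set.set_eqI iffI)
  fix x assume "x \<in> U_C d"
  then show "x \<in> {x \<in> Vsp d. \<forall>k\<in>{1..d}. lanczos_norm d x k \<noteq> 0}"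
    using U_C_lanczos_norm_neq_0[OF d, of x d] unfolding U_C_def by blast
next
  fix x assume "x \<in> {x \<in> Vsp d. \<forall>k\<in>{1..d}. lanczos_norm d x k \<noteq> 0}"
  then have x: "x \<in> Vsp d" and nz: "\<forall>k\<in>{1..d}. lanczos_norm d x k \<noteq> 0" by auto
  have "\<exists>c. finv d k x = Some c \<and> c \<noteq> 0" if k: "k \<in> {1..d}" for k
  proof -
    have nzk: "\<forall>l\<in>{1..k - 1}. lanczos_norm d x l \<noteq> 0" "lanczos_norm d x k \<noteq> 0" using nz k by auto
    show ?thesis
    proof (cases "k = 1")
      case False
      then have "finv_denom d k x \<noteq> 0" using nzk(1) k by (intro finv_denom_neq_0) auto
      then show ?thesis using finv_eq_Some[OF d k x nzk(1)] nzk(2) False by simp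
    qed (use finv_eq_Some[OF d k x nzk(1)] nzk(2) in simp)
  qed
  then show "x \<in> U_C d" unfolding U_C_def using x by fastforce
qed

lemma U_R_eq:
  assumes d: "2 \<le> d"
  shows "U_R d = {x \<in> VR d. \<forall>k\<in>{1..d}. lanczos_norm d x k \<noteq> 0}"
proof -
  have "VR d \<subseteq> Vsp d" using mem_VR_iff by blast
  then show ?thesis unfolding U_R_def U_C_eq[OF d] by blast
qed

lemma finv_real_rep:
  assumes d: "2 \<le> d" and k: "k \<in> {1..d}"
  shows "\<exists>P Q. poly_fun d \<real> P \<and> poly_fun d \<real> Q \<and> finv d k = ratfun_of d P Q
    \<and> (\<forall>x\<in>Vsp d. (\<forall>l\<in>{1..d}. lanczos_norm d x l \<noteq> 0) \<longrightarrow> Q x \<noteq> 0)"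
proof (cases "k = 1")
  case True
  then show ?thesis using finv_1 poly_fun_lanczos_norm poly_fun.const[of 1 \<real>]
    by (intro exI[of _ "\<lambda>x. lanczos_norm d x 1"] exI[of _ "\<lambda>_. 1"]) auto
next
  case False
  then have "2 \<le> k" "k \<le> d" using k by auto
  then have "finv_denom d k x \<noteq> 0" if "\<forall>l\<in>{1..d}. lanczos_norm d x l \<noteq> 0" for x
    using that by (intro finv_denom_neq_0) auto
  then show ?thesis unfolding finv_eq_finv_lanczos[OF d \<open>2 \<le> k\<close> \<open>k \<le> d\<close>] finv_lanczos_def
    using poly_fun_lanczos_norm poly_fun_finv_denom by blast
qed

lemma invariant_finv:
  assumes d: "2 \<le> d" and k: "k \<in> {1..d}"
  shows "invariant d UNIV (finv d k)"
proof (cases "k = 1")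
  case True
  have b: "base_pt d \<in> Vsp d" using d by (intro base_pt_Vsp) simp
  show ?thesis unfolding True finv_1
    by (rule invariant_ratfun_of[OF poly_fun_mono[OF poly_fun_lanczos_norm] poly_fun.const b])
      (simp_all add: lanczos_norm_act)
next
  case False
  then show ?thesis using k finv_eq_finv_lanczos[OF d] invariant_finv_lanczos[OF d] by auto
qed

section \<open>The real points\<close>

lemma is_ratfun_finv:
  assumes d: "2 \<le> d" and i: "i \<in> {1..d}"
  shows "is_ratfun d \<real> (finv d i)"
proof -
  obtain P Q where PQ: "poly_fun d \<real> P" "poly_fun d \<real> Q" "finv d i = ratfun_of d P Q"
      "\<forall>x\<in>Vsp d. (\<forall>l\<in>{1..d}. lanczos_norm d x l \<noteq> 0) \<longrightarrow> Q x \<noteq> 0"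
    using finv_real_rep[OF d i] by blast
  have "base_pt d \<in> Vsp d" using d by (intro base_pt_Vsp) simp
  moreover have "\<forall>l\<in>{1..d}. lanczos_norm d (base_pt d) l \<noteq> 0" using lanczos_norm_base_pt[OF d] by blast
  ultimately show ?thesis unfolding is_ratfun_def using PQ by blast
qed

lemma U_R_eq_real_reps:
  assumes d: "2 \<le> d"
  shows "U_R d = {x \<in> VR d. (\<forall>k\<in>{1..d}. \<exists>P Q. poly_fun d \<real> P \<and> poly_fun d \<real> Q
                              \<and> Q x \<noteq> 0 \<and> finv d k = ratfun_of d P Q)
                        \<and> (\<Prod>k=1..d. the (finv d k x)) \<noteq> 0}"
proof (intro Set.set_eqI iffI)
  fix x assume x: "x \<in> U_R d"
  then have "x \<in> Vsp d" "\<forall>l\<in>{1..d}. lanczos_norm d x l \<noteq> 0" using U_R_eq[OF d] mem_VR_iff by auto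
  then have "\<forall>k\<in>{1..d}. \<exists>P Q. poly_fun d \<real> P \<and> poly_fun d \<real> Q \<and> Q x \<noteq> 0 \<and> finv d k = ratfun_of d P Q"
    using finv_real_rep[OF d] by metis
  then show "x \<in> {x \<in> VR d. (\<forall>k\<in>{1..d}. \<exists>P Q. poly_fun d \<real> P \<and> poly_fun d \<real> Q
      \<and> Q x \<noteq> 0 \<and> finv d k = ratfun_of d P Q) \<and> (\<Prod>k=1..d. the (finv d k x)) \<noteq> 0}"
    using x unfolding U_R_def U_C_def by auto
next
  fix x assume "x \<in> {x \<in> VR d. (\<forall>k\<in>{1..d}. \<exists>P Q. poly_fun d \<real> P \<and> poly_fun d \<real> Q
      \<and> Q x \<noteq> 0 \<and> finv d k = ratfun_of d P Q) \<and> (\<Prod>k=1..d. the (finv d k x)) \<noteq> 0}"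
  then have x: "x \<in> VR d" "x \<in> Vsp d" "(\<Prod>k=1..d. the (finv d k x)) \<noteq> 0"
    and reps: "\<forall>k\<in>{1..d}. \<exists>P Q. poly_fun d \<real> P \<and> poly_fun d \<real> Q \<and> Q x \<noteq> 0 \<and> finv d k = ratfun_of d P Q"
    unfolding mem_VR_iff by auto
  have "finv d k x \<noteq> None" if "k \<in> {1..d}" for k
    using reps that ratfun_of_eq_quotient[OF poly_fun_mono poly_fun_mono x(2)] by fastforce
  then show "x \<in> U_R d" unfolding U_R_def U_C_def using x by auto
qed

lemma act_U_R: "2 \<le> d \<Longrightarrow> A \<in> Orth d \<real> \<Longrightarrow> x \<in> U_R d \<Longrightarrow> act d A x \<in> U_R d"
  unfolding U_R_eq mem_Collect_eq using act_VR lanczos_norm_act mem_VR_iff by metis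

lemma base_pt_U_R: "2 \<le> d \<Longrightarrow> base_pt d \<in> U_R d"
  unfolding U_R_eq using base_pt_VR lanczos_norm_base_pt by auto

lemma zariski_open_U_R:
  assumes d: "2 \<le> d"
  shows "zariski_open_R d (U_R d)"
  unfolding zariski_open_R_def
proof (intro conjI exI[of _ "{\<lambda>x. \<Prod>k=1..d. lanczos_norm d x k}"])
  show "U_R d \<subseteq> VR d" unfolding U_R_def by blast
  show "\<forall>p\<in>{\<lambda>x. \<Prod>k=1..d. lanczos_norm d x k}. poly_fun d \<real> p"
    by (auto intro!: poly_fun_prod poly_fun_lanczos_norm)
  show "VR d - U_R d = {x \<in> VR d. \<forall>p\<in>{\<lambda>x. \<Prod>k=1..d. lanczos_norm d x k}. p x = 0}"
    unfolding U_R_eq[OF d] by auto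
qed

lemma U_R_orbit_meets_Lset:
  assumes d: "2 \<le> d" and x: "x \<in> U_R d"
  shows "\<exists>A\<in>Orth d \<real>. act d A x \<in> Lset d (d - 1) \<inter> VR d"
proof -
  have xR: "x \<in> VR d" and nz: "\<forall>k\<in>{1..d}. lanczos_norm d x k \<noteq> 0" using x U_R_eq[OF d] by auto
  have R: "lanczos_frame d x \<in> Orth d \<real>" by (rule lanczos_frame_real[OF xR nz])
  have "act d (lanczos_frame d x) x \<in> Lset d (d - 1)"
    using act_lanczos_frame_Lslice[OF d _ nz] xR Lset_eq_Lslice[of "d - 1" d] d by (auto simp: mem_VR_iff)
  then show ?thesis using R act_VR[OF R xR] by blast
qed

theorem proposition3p12:
  fixes d :: nat
  assumes "2 \<le> d"
  shows "(\<forall>i\<in>{1..d}. is_ratfun d \<real> (finv d i) \<and> invariant d \<real> (finv d i))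
    \<and> U_R d = {x \<in> VR d. (\<forall>k\<in>{1..d}. \<exists>P Q. poly_fun d \<real> P \<and> poly_fun d \<real> Q
                              \<and> Q x \<noteq> 0 \<and> finv d k = ratfun_of d P Q)
                        \<and> (\<Prod>k=1..d. the (finv d k x)) \<noteq> 0}
    \<and> (\<forall>A\<in>Orth d \<real>. \<forall>x\<in>U_R d. act d A x \<in> U_R d)
    \<and> U_R d \<noteq> {}
    \<and> zariski_open_R d (U_R d)
    \<and> (\<forall>x\<in>U_R d. \<exists>A\<in>Orth d \<real>. act d A x \<in> Lset d (d - 1) \<inter> VR d)"
  using is_ratfun_finv[OF assms] invariant_mono[OF invariant_finv[OF assms]] U_R_eq_real_reps[OF assms]
    act_U_R[OF assms] base_pt_U_R[OF assms] zariski_open_U_R[OF assms] U_R_orbit_meets_Lset[OF assms]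
  by blast

end
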